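(* Let $G$ be a finite abelian $p$-group generated by $d$ elements, acting on a finite abelian $p$-group $M$. Assume there is a subgroup $H_0\subset G$ such that $G/H_0$ is cyclic and $H_0$ acts trivially on $M$ (i.e. $M^{H_0}=M$). Then $$|\mathrm{H}^1(G,M)|\leq |M^G|^{d}\quad\text{and}\quad |\mathrm{H}^2(G,M)|\leq |M^G|^{d^2}.$$ *)

theory Defs
  imports "HOL-Algebra.Algebra"
begin

definition module_action :: "('g,'a) monoid_scheme \<Rightarrow> ('m,'b) monoid_scheme \<Rightarrow> ('g \<Rightarrow> 'm \<Rightarrow> 'm) \<Rightarrow> bool" where
  "module_action G M act \<longleftrightarrow> group G \<and> comm_group M \<and>
     (\<forall>g\<in>carrier G. act g \<in> hom M M) \<and>
     (\<forall>m\<in>carrier M. act \<one>\<^bsub>G\<^esub> m = m) \<and>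
     (\<forall>g\<in>carrier G. \<forall>h\<in>carrier G. \<forall>m\<in>carrier M. act (g \<otimes>\<^bsub>G\<^esub> h) m = act g (act h m))"

definition p_group :: "nat \<Rightarrow> ('g,'a) monoid_scheme \<Rightarrow> bool" where
  "p_group p G \<longleftrightarrow> Factorial_Ring.prime p \<and> finite (carrier G) \<and> (\<exists>k. order G = p ^ k)"

definition invariants :: "('g,'a) monoid_scheme \<Rightarrow> ('m,'b) monoid_scheme \<Rightarrow> ('g \<Rightarrow> 'm \<Rightarrow> 'm) \<Rightarrow> 'm set" where
  "invariants G M act = {m \<in> carrier M. \<forall>g\<in>carrier G. act g m = m}"

definition cocycles1 where
  "cocycles1 G M act = {f \<in> carrier G \<rightarrow>\<^sub>E carrier M.
     \<forall>g\<in>carrier G. \<forall>h\<in>carrier G. f (g \<otimes>\<^bsub>G\<^esub> h) = f g \<otimes>\<^bsub>M\<^esub> act g (f h)}"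

definition coboundaries1 where
  "coboundaries1 G M act = {f \<in> carrier G \<rightarrow>\<^sub>E carrier M.
     \<exists>m\<in>carrier M. \<forall>g\<in>carrier G. f g = act g m \<otimes>\<^bsub>M\<^esub> inv\<^bsub>M\<^esub> m}"

definition H1 where
  "H1 G M act = (\<lambda>f. {f' \<in> cocycles1 G M act. \<exists>b\<in>coboundaries1 G M act.
                          \<forall>g\<in>carrier G. f' g = f g \<otimes>\<^bsub>M\<^esub> b g}) ` cocycles1 G M act"

definition cocycles2 where
  "cocycles2 G M act = {f \<in> carrier G \<rightarrow>\<^sub>E (carrier G \<rightarrow>\<^sub>E carrier M).
     \<forall>g\<in>carrier G. \<forall>h\<in>carrier G. \<forall>k\<in>carrier G.
       act g (f h k) \<otimes>\<^bsub>M\<^esub> f g (h \<otimes>\<^bsub>G\<^esub> k) = f (g \<otimes>\<^bsub>G\<^esub> h) k \<otimes>\<^bsub>M\<^esub> f g h}"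

definition coboundaries2 where
  "coboundaries2 G M act = {f \<in> carrier G \<rightarrow>\<^sub>E (carrier G \<rightarrow>\<^sub>E carrier M).
     \<exists>\<phi>\<in>carrier G \<rightarrow>\<^sub>E carrier M. \<forall>g\<in>carrier G. \<forall>h\<in>carrier G.
       f g h = act g (\<phi> h) \<otimes>\<^bsub>M\<^esub> inv\<^bsub>M\<^esub> (\<phi> (g \<otimes>\<^bsub>G\<^esub> h)) \<otimes>\<^bsub>M\<^esub> \<phi> g}"

definition H2 where
  "H2 G M act = (\<lambda>f. {f' \<in> cocycles2 G M act. \<exists>b\<in>coboundaries2 G M act.
                          \<forall>g\<in>carrier G. \<forall>h\<in>carrier G. f' g h = f g h \<otimes>\<^bsub>M\<^esub> b g h}) ` cocycles2 G M act"

end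

theory Submission
  imports Defs
begin

text \<open>
  Choose generators \<open>x, h_1, ..., h_(d-1)\<close> of \<open>G\<close> such that \<open>x\<close> generates \<open>G\<close> modulo \<open>H0\<close>
  and every \<open>h_i\<close> lies in \<open>H0\<close>: since \<open>G/H0\<close> is a cyclic \<open>p\<close>-group, one of any \<open>d\<close> generators
  generates it, and the others can be corrected by powers of that one. Each subgroup
  \<open>K_i = \<langle>x, h_1, ..., h_i\<rangle>\<close> then has \<open>M^K_i = M^x = M^G\<close>.

  Adjoining one element \<open>h\<close> to a subgroup \<open>A\<close> of a finite abelian group \<open>K = A\<langle>h\<rangle>\<close> gives
  \<open>|H^1(K)| \<le> |H^1(A)| |M^K|\<close> and \<open>|H^2(K)| \<le> |H^2(A)| |H^1(K)|\<close>, by counting inhomogeneous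
  cocycles. A 1-cocycle is determined by its restriction to \<open>A\<close> and its value at \<open>h\<close>, which
  is determined modulo \<open>M^A\<close>. A 2-cocycle \<open>u\<close> vanishing on \<open>A \<times> A\<close> is determined by the
  \<open>|K| - |A| - 1\<close> values \<open>u(g,h)\<close> with \<open>gh \<notin> A\<close>, \<open>g \<noteq> 1\<close>, the 1-cocycle \<open>a \<mapsto> u(h,a)/u(a,h)\<close>
  of \<open>A\<close>, and the product of the \<open>u(h^i,h)\<close> for \<open>i\<close> below the order of \<open>h\<close> modulo \<open>A\<close>, which
  is determined modulo \<open>M^K\<close>.

  Adjoining \<open>x, h_1, ..., h_(d-1)\<close> to the trivial group one at a time therefore gives
  \<open>|H^1(G)| \<le> |M^G|^d\<close> and \<open>|H^2(G)| \<le> |M^G|^(1+2+...+d) \<le> |M^G|^(d^2)\<close>.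
\<close>

lemma card_eq_sum_card_fibres:
  assumes "finite S"
  shows "card S = (\<Sum>t\<in>\<phi> ` S. card {s'\<in>S. \<phi> s' = t})"
proof -
  have eq: "S = (\<Union>t\<in>\<phi> ` S. {s'\<in>S. \<phi> s' = t})" by auto
  show ?thesis
    by (subst eq, rule card_UN_disjoint) (use assms in auto)
qed

lemma card_le_by_fibres:
  assumes "finite S" "\<phi> ` S \<subseteq> T" "finite T"
    and "\<And>s. s \<in> S \<Longrightarrow> card {s'\<in>S. \<phi> s' = \<phi> s} \<le> k"
  shows "card S \<le> card T * k"
proof -
  have "card S \<le> (\<Sum>t\<in>\<phi> ` S. k)"
    unfolding card_eq_sum_card_fibres[OF assms(1), of \<phi>] by (rule sum_mono) (use assms(4) in auto)
  also have "\<dots> \<le> card T * k" by (simp add: assms card_mono)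
  finally show ?thesis .
qed

lemma card_eq_by_fibres:
  assumes "finite S" and "\<And>s. s \<in> S \<Longrightarrow> card {s'\<in>S. \<phi> s' = \<phi> s} = k"
  shows "card S = card (\<phi> ` S) * k"
proof -
  have "card S = (\<Sum>t\<in>\<phi> ` S. k)"
    unfolding card_eq_sum_card_fibres[OF assms(1), of \<phi>] by (rule sum.cong) (use assms(2) in auto)
  then show ?thesis by simp
qed

lemma (in group) mult_inv_eq_one_iff:
  "x \<in> carrier G \<Longrightarrow> y \<in> carrier G \<Longrightarrow> x \<otimes> inv y = \<one> \<longleftrightarrow> x = y"
  by (simp add: inv_solve_right')

lemma (in group) mult_inv_cancel:
  "x \<in> carrier G \<Longrightarrow> y \<in> carrier G \<Longrightarrow> x \<otimes> (inv x \<otimes> y) = y"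
  "x \<in> carrier G \<Longrightarrow> y \<in> carrier G \<Longrightarrow> inv x \<otimes> (x \<otimes> y) = y"
  by (simp_all add: m_assoc[symmetric])

lemma (in comm_group) mult_inv_cancel_comm:
  "x \<in> carrier G \<Longrightarrow> y \<in> carrier G \<Longrightarrow> z \<in> carrier G \<Longrightarrow> x \<otimes> (y \<otimes> (inv x \<otimes> z)) = y \<otimes> z"
  "x \<in> carrier G \<Longrightarrow> y \<in> carrier G \<Longrightarrow> z \<in> carrier G \<Longrightarrow> inv x \<otimes> (y \<otimes> (x \<otimes> z)) = y \<otimes> z"
  "x \<in> carrier G \<Longrightarrow> y \<in> carrier G \<Longrightarrow> x \<otimes> (y \<otimes> inv x) = y"
  "x \<in> carrier G \<Longrightarrow> y \<in> carrier G \<Longrightarrow> inv x \<otimes> (y \<otimes> x) = y"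
  "x \<in> carrier G \<Longrightarrow> y \<in> carrier G \<Longrightarrow> z \<in> carrier G \<Longrightarrow> w \<in> carrier G \<Longrightarrow>
    x \<otimes> (y \<otimes> (z \<otimes> (inv x \<otimes> w))) = y \<otimes> (z \<otimes> w)"
  "x \<in> carrier G \<Longrightarrow> y \<in> carrier G \<Longrightarrow> z \<in> carrier G \<Longrightarrow> w \<in> carrier G \<Longrightarrow>
    inv x \<otimes> (y \<otimes> (z \<otimes> (x \<otimes> w))) = y \<otimes> (z \<otimes> w)"
  "x \<in> carrier G \<Longrightarrow> y \<in> carrier G \<Longrightarrow> z \<in> carrier G \<Longrightarrow> x \<otimes> (y \<otimes> (z \<otimes> inv x)) = y \<otimes> z"
  "x \<in> carrier G \<Longrightarrow> y \<in> carrier G \<Longrightarrow> z \<in> carrier G \<Longrightarrow> inv x \<otimes> (y \<otimes> (z \<otimes> x)) = y \<otimes> z"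
         apply (subst m_lcomm; simp add: mult_inv_cancel)
        apply (subst m_lcomm; simp add: mult_inv_cancel)
       apply (subst m_comm[of y]; simp add: m_assoc[symmetric])
      apply (subst m_comm[of y]; simp add: m_assoc[symmetric])
     apply (subst m_lcomm; simp; subst m_lcomm; simp add: mult_inv_cancel)
    apply (subst m_lcomm; simp; subst m_lcomm; simp add: mult_inv_cancel)
   apply (subst m_lcomm; simp; subst m_comm[of z]; simp add: m_assoc[symmetric])
  apply (subst m_lcomm; simp; subst m_comm[of z]; simp add: m_assoc[symmetric])
  done

lemma (in comm_group) div_eq_of_cross_mult:
  assumes "x \<in> carrier G" "y \<in> carrier G" "p \<in> carrier G" "q \<in> carrier G" "r \<in> carrier G" "t \<in>
    carrier G"
    and "x \<otimes> q \<otimes> t = y \<otimes> p \<otimes> r"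
  shows "x \<otimes> inv y = p \<otimes> inv q \<otimes> (r \<otimes> inv t)"
proof -
  have x: "x = y \<otimes> p \<otimes> r \<otimes> inv (q \<otimes> t)"
    by (subst inv_solve_right) (use assms in \<open>simp_all add: m_assoc\<close>)
  have "p \<otimes> inv q \<otimes> (r \<otimes> inv t) \<otimes> y = y \<otimes> p \<otimes> r \<otimes> inv (q \<otimes> t)"
    using assms(1-6) by (simp add: m_ac inv_mult)
  then show ?thesis using assms(1-6) x by (simp add: inv_solve_right')
qed

lemma (in group_hom) card_eq_card_image_mult_card_kernel:
  assumes "finite (carrier G)"
  shows "card (carrier G) = card (h ` carrier G) * card (kernel G H h)"
proof (rule card_eq_by_fibres[OF assms])
  fix s assume s: "s \<in> carrier G"
  have "{s' \<in> carrier G. h s' = h s} = (\<lambda>k. s \<otimes>\<^bsub>G\<^esub> k) ` kernel G H h"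
  proof (intro equalityI subsetI)
    fix s' assume "s' \<in> {s' \<in> carrier G. h s' = h s}"
    then have s': "s' \<in> carrier G" "h s' = h s" by auto
    have "inv\<^bsub>G\<^esub> s \<otimes>\<^bsub>G\<^esub> s' \<in> kernel G H h"
      using s s' by (auto simp: kernel_def)
    moreover have "s' = s \<otimes>\<^bsub>G\<^esub> (inv\<^bsub>G\<^esub> s \<otimes>\<^bsub>G\<^esub> s')"
      using s s' by (simp add: G.m_assoc[symmetric])
    ultimately show "s' \<in> (\<lambda>k. s \<otimes>\<^bsub>G\<^esub> k) ` kernel G H h" by blast
  qed (use s in \<open>auto simp: kernel_def\<close>)
  also have "card \<dots> = card (kernel G H h)"
    by (rule card_image) (use s in \<open>auto simp: inj_on_def kernel_def\<close>)
  finally show "card {s' \<in> carrier G. h s' = h s} = card (kernel G H h)" .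
qed

lemma (in group) card_cosets_mult_card_subgroup:
  assumes fin: "finite (carrier G)" and Z: "subgroup Z G" and B: "subgroup B G" and BZ: "B \<subseteq> Z"
  shows "card ((\<lambda>f. {f'\<in>Z. \<exists>b\<in>B. f' = f \<otimes> b}) ` Z) * card B = card Z"
proof -
  let ?Z = "G\<lparr>carrier := Z\<rparr>"
  interpret Z: group ?Z by (rule subgroup.subgroup_is_group[OF Z is_group])
  have "f <#\<^bsub>?Z\<^esub> B = {f'\<in>Z. \<exists>b\<in>B. f' = f \<otimes> b}" if "f \<in> Z" for f
    using that BZ subgroup.m_closed[OF Z] by (auto simp: l_coset_def)
  then have "(\<lambda>f. {f'\<in>Z. \<exists>b\<in>B. f' = f \<otimes> b}) ` Z = lcosets\<^bsub>?Z\<^esub> B"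
    by (auto simp: LCOSETS_def)
  moreover have "finite Z" using fin Z by (meson finite_subset subgroup.subset)
  ultimately show ?thesis
    using Z.l_lagrange[OF _ subgroup_incl[OF B Z BZ]] by (simp add: order_def)
qed

definition pointwise_group :: "('m,'b) monoid_scheme \<Rightarrow> 'g set \<Rightarrow> ('g \<Rightarrow> 'm) monoid" where
  "pointwise_group M S = \<lparr>carrier = S \<rightarrow>\<^sub>E carrier M, monoid.mult = (\<lambda>f g. \<lambda>x\<in>S. f x \<otimes>\<^bsub>M\<^esub> g x),
      one = (\<lambda>x\<in>S. \<one>\<^bsub>M\<^esub>)\<rparr>"

lemma pointwise_group_simps [simp]:
  "carrier (pointwise_group M S) = S \<rightarrow>\<^sub>E carrier M"
  "f \<otimes>\<^bsub>pointwise_group M S\<^esub> g = (\<lambda>x\<in>S. f x \<otimes>\<^bsub>M\<^esub> g x)"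
  "\<one>\<^bsub>pointwise_group M S\<^esub> = (\<lambda>x\<in>S. \<one>\<^bsub>M\<^esub>)"
  by (simp_all add: pointwise_group_def)

lemma comm_group_pointwise_group:
  assumes "comm_group M" shows "comm_group (pointwise_group M S)"
proof -
  interpret M: comm_group M by fact
  show ?thesis
  proof (rule comm_groupI, goal_cases)
    case (1 x y) then show ?case by (auto simp: PiE_iff)
  next
    case 2 then show ?case by auto
  next
    case (3 x y z) then show ?case by (auto simp: PiE_iff M.m_assoc)
  next
    case (4 x y) then show ?case by (auto simp: PiE_iff M.m_comm)
  next
    case (5 x) then show ?case by (force simp: PiE_iff extensional_def)
  next
    case (6 x)
    show ?case
      by (rule bexI[where x="\<lambda>s\<in>S. inv\<^bsub>M\<^esub> x s"]) (use 6 in \<open>auto simp: PiE_iff\<close>)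
  qed
qed

lemma pointwise_group_inv:
  assumes "comm_group M" "f \<in> S \<rightarrow>\<^sub>E carrier M"
  shows "inv\<^bsub>pointwise_group M S\<^esub> f = (\<lambda>x\<in>S. inv\<^bsub>M\<^esub> f x)"
proof -
  interpret M: comm_group M by fact
  interpret F: comm_group "pointwise_group M S" by (rule comm_group_pointwise_group) fact
  show ?thesis
    by (rule F.inv_equality) (use assms(2) in \<open>auto simp: PiE_iff\<close>)
qed

section \<open>Cocycles, coboundaries and the orders of \<open>H\<^sup>1\<close> and \<open>H\<^sup>2\<close>\<close>

lemma module_action_subgroup:
  assumes "module_action K M act" "subgroup A K"
  shows "module_action (K\<lparr>carrier := A\<rparr>) M act"
proof -
  have "group K" using assms(1) by (simp add: module_action_def)
  then show ?thesis using assms subgroup.subgroup_is_group[OF assms(2)]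
    unfolding module_action_def by (auto simp: subsetD[OF subgroup.subset[OF assms(2)]])
qed

locale gmodule =
  fixes K :: "('g,'a) monoid_scheme" and M :: "('m,'b) monoid_scheme" and act :: "'g \<Rightarrow> 'm \<Rightarrow> 'm"
  assumes module_action: "module_action K M act"
begin

sublocale K: group K using module_action by (simp add: module_action_def)
sublocale M: comm_group M using module_action by (simp add: module_action_def)

declare M.mult_inv_cancel [simp] M.mult_inv_cancel_comm [simp]

lemma group_hom_act: "g \<in> carrier K \<Longrightarrow> group_hom M M (act g)"
  using module_action by (simp add: module_action_def group_hom_def group_hom_axioms_def M.is_group)

lemma act_closed [simp]: "g \<in> carrier K \<Longrightarrow> m \<in> carrier M \<Longrightarrow> act g m \<in> carrier M"
  using group_hom.hom_closed[OF group_hom_act] by blast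

lemma act_mult [simp]:
  "g \<in> carrier K \<Longrightarrow> m \<in> carrier M \<Longrightarrow> n \<in> carrier M \<Longrightarrow> act g (m \<otimes>\<^bsub>M\<^esub> n) = act g m \<otimes>\<^bsub>M\<^esub> act g n"
  using group_hom.hom_mult[OF group_hom_act] by blast

lemma act_inv [simp]: "g \<in> carrier K \<Longrightarrow> m \<in> carrier M \<Longrightarrow> act g (inv\<^bsub>M\<^esub> m) = inv\<^bsub>M\<^esub> (act g m)"
  using group_hom.hom_inv[OF group_hom_act] by blast

lemma act_one [simp]: "g \<in> carrier K \<Longrightarrow> act g \<one>\<^bsub>M\<^esub> = \<one>\<^bsub>M\<^esub>"
  using group_hom.hom_one[OF group_hom_act] by blast

lemma act_id [simp]: "m \<in> carrier M \<Longrightarrow> act \<one>\<^bsub>K\<^esub> m = m"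
  using module_action by (simp add: module_action_def)

lemma act_comp:
  "g \<in> carrier K \<Longrightarrow> h \<in> carrier K \<Longrightarrow> m \<in> carrier M \<Longrightarrow> act (g \<otimes>\<^bsub>K\<^esub> h) m = act g (act h m)"
  using module_action by (simp add: module_action_def)

lemma act_generate_trivial:
  assumes "H \<subseteq> carrier K" "m \<in> carrier M" "\<forall>g\<in>H. act g m = m"
  shows "\<forall>g\<in>generate K H. act g m = m"
proof
  fix g assume "g \<in> generate K H"
  then show "act g m = m"
  proof induction
    case (inv g)
    then have g: "g \<in> carrier K" using assms(1) by auto
    have "act (inv\<^bsub>K\<^esub> g) m = act (inv\<^bsub>K\<^esub> g) (act g m)" using inv assms by simp
    also have "\<dots> = m" using act_comp[of "inv\<^bsub>K\<^esub> g" g m] g assms by simp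
    finally show ?case .
  next
    case (eng g1 g2)
    then have "g1 \<in> carrier K" "g2 \<in> carrier K"
      using K.generate_incl assms(1) by blast+
    then show ?case using act_comp eng assms by simp
  qed (use assms in simp_all)
qed

abbreviation "C1 \<equiv> pointwise_group M (carrier K)"
abbreviation "C2 \<equiv> pointwise_group C1 (carrier K)"

sublocale C1: comm_group C1 by (rule comm_group_pointwise_group) (rule M.comm_group_axioms)
sublocale C2: comm_group C2 by (rule comm_group_pointwise_group) (rule C1.comm_group_axioms)

lemma C1_inv: "f \<in> carrier K \<rightarrow>\<^sub>E carrier M \<Longrightarrow> inv\<^bsub>C1\<^esub> f = (\<lambda>x\<in>carrier K. inv\<^bsub>M\<^esub> f x)"
  by (rule pointwise_group_inv) (rule M.comm_group_axioms)

lemma C2_inv: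
  "f \<in> carrier K \<rightarrow>\<^sub>E carrier C1 \<Longrightarrow> inv\<^bsub>C2\<^esub> f = (\<lambda>x\<in>carrier K. \<lambda>y\<in>carrier K. inv\<^bsub>M\<^esub> f x y)"
  by (subst pointwise_group_inv[OF C1.comm_group_axioms], assumption)
    (auto simp: C1_inv PiE_iff intro!: restrict_ext)

lemma finite_cocycles1:
  "finite (carrier K) \<Longrightarrow> finite (carrier M) \<Longrightarrow> finite (cocycles1 K M act)"
  by (rule finite_subset[OF _ finite_PiE[of "carrier K" "\<lambda>_. carrier M"]])
    (auto simp: cocycles1_def)

lemma finite_cocycles2:
  "finite (carrier K) \<Longrightarrow> finite (carrier M) \<Longrightarrow> finite (cocycles2 K M act)"
  by (rule finite_subset[OF _ finite_PiE[of "carrier K" "\<lambda>_. carrier K \<rightarrow>\<^sub>E carrier M"]])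
    (auto simp: cocycles2_def finite_PiE)

lemma subgroup_cocycles1: "subgroup (cocycles1 K M act) C1"
proof (rule C1.subgroupI)
  show "cocycles1 K M act \<subseteq> carrier C1" by (auto simp: cocycles1_def)
  have "(\<lambda>x\<in>carrier K. \<one>\<^bsub>M\<^esub>) \<in> cocycles1 K M act" by (auto simp: cocycles1_def)
  then show "cocycles1 K M act \<noteq> {}" by blast
next
  fix a assume a: "a \<in> cocycles1 K M act"
  then have "\<And>x. x \<in> carrier K \<Longrightarrow> a x \<in> carrier M" by (auto simp: cocycles1_def)
  then show "inv\<^bsub>C1\<^esub> a \<in> cocycles1 K M act"
    using a by (auto simp: cocycles1_def C1_inv M.inv_mult)
next
  fix a b assume a: "a \<in> cocycles1 K M act" and b: "b \<in> cocycles1 K M act"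
  then have "\<And>x. x \<in> carrier K \<Longrightarrow> a x \<in> carrier M" "\<And>x. x \<in> carrier K \<Longrightarrow> b x \<in> carrier M"
    by (auto simp: cocycles1_def)
  then show "a \<otimes>\<^bsub>C1\<^esub> b \<in> cocycles1 K M act"
    using a b by (auto simp: cocycles1_def M.m_ac)
qed

definition coboundary0 :: "'m \<Rightarrow> 'g \<Rightarrow> 'm" where
  "coboundary0 m = (\<lambda>g\<in>carrier K. act g m \<otimes>\<^bsub>M\<^esub> inv\<^bsub>M\<^esub> m)"

lemma group_hom_coboundary0: "group_hom M C1 coboundary0"
proof -
  have "coboundary0 \<in> hom M C1"
    by (rule homI) (auto simp: coboundary0_def M.m_ac M.inv_mult intro!: restrict_ext)
  then show ?thesis
    by (intro group_hom.intro group_hom_axioms.intro) (auto intro: M.is_group C1.is_group)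
qed

lemma coboundaries1_eq_image: "coboundaries1 K M act = coboundary0 ` carrier M"
proof (intro equalityI subsetI)
  fix f assume "f \<in> coboundaries1 K M act"
  then obtain m where f: "f \<in> carrier K \<rightarrow>\<^sub>E carrier M" "m \<in> carrier M"
      "\<forall>g\<in>carrier K. f g = act g m \<otimes>\<^bsub>M\<^esub> inv\<^bsub>M\<^esub> m"
    by (auto simp: coboundaries1_def)
  then have "f = coboundary0 m" by (auto simp: coboundary0_def PiE_iff extensional_def intro!: ext)
  then show "f \<in> coboundary0 ` carrier M" using f by blast
qed (auto simp: coboundaries1_def coboundary0_def)

lemma kernel_coboundary0: "kernel M C1 coboundary0 = invariants K M act"
proof -
  have "act g m \<otimes>\<^bsub>M\<^esub> inv\<^bsub>M\<^esub> m = \<one>\<^bsub>M\<^esub> \<longleftrightarrow> act g m = m" if "g \<in> carrier K" "m \<in> carrier M" for g m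
    using that by (simp add: M.mult_inv_eq_one_iff)
  then show ?thesis
    by (auto simp: kernel_def invariants_def coboundary0_def restrict_def fun_eq_iff split:
      if_splits)
qed

lemma subgroup_coboundaries1: "subgroup (coboundaries1 K M act) C1"
  unfolding coboundaries1_eq_image by (rule group_hom.img_is_subgroup[OF group_hom_coboundary0])

lemma coboundaries1_subset_cocycles1: "coboundaries1 K M act \<subseteq> cocycles1 K M act"
  unfolding coboundaries1_eq_image
  by (auto simp: coboundary0_def cocycles1_def act_comp M.m_ac M.inv_mult)

lemma card_coboundaries1:
  assumes "finite (carrier M)"
  shows "card (coboundaries1 K M act) * card (invariants K M act) = card (carrier M)"
  using group_hom.card_eq_card_image_mult_card_kernel[OF group_hom_coboundary0 assms]
  by (simp add: coboundaries1_eq_image kernel_coboundary0)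

lemma H1_eq_cosets:
  "H1 K M act = (\<lambda>f. {f'\<in>cocycles1 K M act. \<exists>b\<in>coboundaries1 K M act. f' = f \<otimes>\<^bsub>C1\<^esub> b}) ` cocycles1 K M
    act"
  unfolding H1_def
proof (rule image_cong[OF refl], rule Collect_cong, rule conj_cong[OF refl], rule bex_cong[OF refl])
  fix f f' b assume "f' \<in> cocycles1 K M act"
  then have "f' \<in> extensional (carrier K)" by (auto simp: cocycles1_def PiE_def)
  then show "(\<forall>g\<in>carrier K. f' g = f g \<otimes>\<^bsub>M\<^esub> b g) = (f' = f \<otimes>\<^bsub>C1\<^esub> b)"
    by (auto simp: extensional_def fun_eq_iff)
qed

lemma card_H1_mult_card_coboundaries1:
  assumes "finite (carrier K)" "finite (carrier M)"
  shows "card (H1 K M act) * card (coboundaries1 K M act) = card (cocycles1 K M act)"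
proof -
  have "finite (carrier C1)" using assms by (simp add: finite_PiE)
  then show ?thesis unfolding H1_eq_cosets
    by (rule C1.card_cosets_mult_card_subgroup[OF _ subgroup_cocycles1 subgroup_coboundaries1
          coboundaries1_subset_cocycles1])
qed

definition coboundary1 :: "('g \<Rightarrow> 'm) \<Rightarrow> 'g \<Rightarrow> 'g \<Rightarrow> 'm" where
  "coboundary1 \<phi> = (\<lambda>g\<in>carrier K. \<lambda>h\<in>carrier K.
     act g (\<phi> h) \<otimes>\<^bsub>M\<^esub> inv\<^bsub>M\<^esub> (\<phi> (g \<otimes>\<^bsub>K\<^esub> h)) \<otimes>\<^bsub>M\<^esub> \<phi> g)"

lemma group_hom_coboundary1: "group_hom C1 C2 coboundary1"
proof -
  have "coboundary1 \<in> hom C1 C2"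
    by (rule homI) (auto simp: coboundary1_def PiE_iff M.m_ac M.inv_mult intro!: restrict_ext)
  then show ?thesis
    by (intro group_hom.intro group_hom_axioms.intro) (auto intro: C1.is_group C2.is_group)
qed

lemma coboundaries2_eq_image: "coboundaries2 K M act = coboundary1 ` carrier C1"
proof (intro equalityI subsetI)
  fix f assume "f \<in> coboundaries2 K M act"
  then obtain \<phi> where f: "f \<in> carrier K \<rightarrow>\<^sub>E (carrier K \<rightarrow>\<^sub>E carrier M)" "\<phi> \<in> carrier K \<rightarrow>\<^sub>E carrier M"
     "\<forall>g\<in>carrier K. \<forall>h\<in>carrier K. f g h = act g (\<phi> h) \<otimes>\<^bsub>M\<^esub> inv\<^bsub>M\<^esub> (\<phi> (g \<otimes>\<^bsub>K\<^esub> h)) \<otimes>\<^bsub>M\<^esub> \<phi> g"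
    by (auto simp: coboundaries2_def)
  then have "f = coboundary1 \<phi>" by (auto simp: coboundary1_def PiE_iff extensional_def intro!: ext)
  then show "f \<in> coboundary1 ` carrier C1" using f by auto
qed (auto simp: coboundaries2_def coboundary1_def PiE_iff)

lemma kernel_coboundary1: "kernel C1 C2 coboundary1 = cocycles1 K M act"
proof -
  have "act g (\<phi> h) \<otimes>\<^bsub>M\<^esub> inv\<^bsub>M\<^esub> (\<phi> (g \<otimes>\<^bsub>K\<^esub> h)) \<otimes>\<^bsub>M\<^esub> \<phi> g = \<one>\<^bsub>M\<^esub>
      \<longleftrightarrow> \<phi> (g \<otimes>\<^bsub>K\<^esub> h) = \<phi> g \<otimes>\<^bsub>M\<^esub> act g (\<phi> h)"
    if "g \<in> carrier K" "h \<in> carrier K" "\<phi> \<in> carrier K \<rightarrow>\<^sub>E carrier M" for g h \<phi>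
  proof -
    have c: "act g (\<phi> h) \<in> carrier M" "\<phi> (g \<otimes>\<^bsub>K\<^esub> h) \<in> carrier M" "\<phi> g \<in> carrier M"
      using that by (auto simp: PiE_iff)
    then have "act g (\<phi> h) \<otimes>\<^bsub>M\<^esub> inv\<^bsub>M\<^esub> (\<phi> (g \<otimes>\<^bsub>K\<^esub> h)) \<otimes>\<^bsub>M\<^esub> \<phi> g
        = (\<phi> g \<otimes>\<^bsub>M\<^esub> act g (\<phi> h)) \<otimes>\<^bsub>M\<^esub> inv\<^bsub>M\<^esub> (\<phi> (g \<otimes>\<^bsub>K\<^esub> h))"
      by (simp add: M.m_ac)
    then show ?thesis using c M.mult_inv_eq_one_iff[of "\<phi> g \<otimes>\<^bsub>M\<^esub> act g (\<phi> h)" "\<phi> (g \<otimes>\<^bsub>K\<^esub> h)"]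
      by auto
  qed
  then show ?thesis
    by (auto simp: kernel_def cocycles1_def coboundary1_def fun_eq_iff restrict_def PiE_iff
        split: if_splits) (metis (no_types, lifting))+
qed

lemma subgroup_cocycles2: "subgroup (cocycles2 K M act) C2"
proof (rule C2.subgroupI)
  show "cocycles2 K M act \<subseteq> carrier C2" by (auto simp: cocycles2_def)
  have "(\<lambda>x\<in>carrier K. \<lambda>y\<in>carrier K. \<one>\<^bsub>M\<^esub>) \<in> cocycles2 K M act" by (auto simp: cocycles2_def)
  then show "cocycles2 K M act \<noteq> {}" by blast
next
  fix a assume a: "a \<in> cocycles2 K M act"
  then have "\<And>x y. x \<in> carrier K \<Longrightarrow> y \<in> carrier K \<Longrightarrow> a x y \<in> carrier M"
    and "a \<in> carrier K \<rightarrow>\<^sub>E carrier C1"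
    by (auto simp: cocycles2_def)
  then show "inv\<^bsub>C2\<^esub> a \<in> cocycles2 K M act"
    using a by (auto simp: cocycles2_def C2_inv M.inv_mult[symmetric])
next
  fix a b assume a: "a \<in> cocycles2 K M act" and b: "b \<in> cocycles2 K M act"
  then have val: "\<And>x y. x \<in> carrier K \<Longrightarrow> y \<in> carrier K \<Longrightarrow> a x y \<in> carrier M"
     "\<And>x y. x \<in> carrier K \<Longrightarrow> y \<in> carrier K \<Longrightarrow> b x y \<in> carrier M"
    by (auto simp: cocycles2_def)
  have "act g (a h k \<otimes>\<^bsub>M\<^esub> b h k) \<otimes>\<^bsub>M\<^esub> (a g (h \<otimes>\<^bsub>K\<^esub> k) \<otimes>\<^bsub>M\<^esub> b g (h \<otimes>\<^bsub>K\<^esub> k)) =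
        (a (g \<otimes>\<^bsub>K\<^esub> h) k \<otimes>\<^bsub>M\<^esub> b (g \<otimes>\<^bsub>K\<^esub> h) k) \<otimes>\<^bsub>M\<^esub> (a g h \<otimes>\<^bsub>M\<^esub> b g h)"
    if "g \<in> carrier K" "h \<in> carrier K" "k \<in> carrier K" for g h k
  proof -
    have "act g (a h k \<otimes>\<^bsub>M\<^esub> b h k) \<otimes>\<^bsub>M\<^esub> (a g (h \<otimes>\<^bsub>K\<^esub> k) \<otimes>\<^bsub>M\<^esub> b g (h \<otimes>\<^bsub>K\<^esub> k)) =
       (act g (a h k) \<otimes>\<^bsub>M\<^esub> a g (h \<otimes>\<^bsub>K\<^esub> k)) \<otimes>\<^bsub>M\<^esub> (act g (b h k) \<otimes>\<^bsub>M\<^esub> b g (h \<otimes>\<^bsub>K\<^esub> k))"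
      using that val by (simp add: M.m_ac)
    also have "\<dots> = (a (g \<otimes>\<^bsub>K\<^esub> h) k \<otimes>\<^bsub>M\<^esub> a g h) \<otimes>\<^bsub>M\<^esub> (b (g \<otimes>\<^bsub>K\<^esub> h) k \<otimes>\<^bsub>M\<^esub> b g h)"
      using a b that by (simp add: cocycles2_def)
    also have "\<dots> = (a (g \<otimes>\<^bsub>K\<^esub> h) k \<otimes>\<^bsub>M\<^esub> b (g \<otimes>\<^bsub>K\<^esub> h) k) \<otimes>\<^bsub>M\<^esub> (a g h \<otimes>\<^bsub>M\<^esub> b g h)"
      using that val by (simp add: M.m_ac)
    finally show ?thesis .
  qed
  then show "a \<otimes>\<^bsub>C2\<^esub> b \<in> cocycles2 K M act"
    using a b val by (auto simp: cocycles2_def PiE_iff)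
qed

lemma subgroup_coboundaries2: "subgroup (coboundaries2 K M act) C2"
  unfolding coboundaries2_eq_image by (rule group_hom.img_is_subgroup[OF group_hom_coboundary1])

lemma coboundaries2_subset_cocycles2: "coboundaries2 K M act \<subseteq> cocycles2 K M act"
proof
  fix f assume "f \<in> coboundaries2 K M act"
  then obtain \<phi> where f: "f = coboundary1 \<phi>" "\<phi> \<in> carrier K \<rightarrow>\<^sub>E carrier M"
    unfolding coboundaries2_eq_image by auto
  have "act g (coboundary1 \<phi> h k) \<otimes>\<^bsub>M\<^esub> coboundary1 \<phi> g (h \<otimes>\<^bsub>K\<^esub> k)
      = coboundary1 \<phi> (g \<otimes>\<^bsub>K\<^esub> h) k \<otimes>\<^bsub>M\<^esub> coboundary1 \<phi> g h"
    if "g \<in> carrier K" "h \<in> carrier K" "k \<in> carrier K" for g h k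
    using that f(2) by (auto simp: coboundary1_def PiE_iff act_comp M.m_ac M.inv_mult K.m_assoc)
  then show "f \<in> cocycles2 K M act"
    using f group_hom.hom_closed[OF group_hom_coboundary1] by (auto simp: cocycles2_def)
qed

lemma card_coboundaries2:
  assumes "finite (carrier K)" "finite (carrier M)"
  shows "card (coboundaries2 K M act) * card (cocycles1 K M act)
    = card (carrier M) ^ card (carrier K)"
proof -
  have "finite (carrier C1)" using assms by (simp add: finite_PiE)
  from group_hom.card_eq_card_image_mult_card_kernel[OF group_hom_coboundary1 this]
  show ?thesis by (simp add: coboundaries2_eq_image kernel_coboundary1 card_PiE[OF assms(1)])
qed

lemma H2_eq_cosets:
  "H2 K M act = (\<lambda>f. {f'\<in>cocycles2 K M act. \<exists>b\<in>coboundaries2 K M act. f' = f \<otimes>\<^bsub>C2\<^esub> b}) ` cocycles2 K M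
    act"
  unfolding H2_def
proof (rule image_cong[OF refl], rule Collect_cong, rule conj_cong[OF refl], rule bex_cong[OF refl])
  fix f f' b assume "f' \<in> cocycles2 K M act"
  then have "f' \<in> carrier K \<rightarrow>\<^sub>E (carrier K \<rightarrow>\<^sub>E carrier M)" by (auto simp: cocycles2_def)
  then show "(\<forall>g\<in>carrier K. \<forall>h\<in>carrier K. f' g h = f g h \<otimes>\<^bsub>M\<^esub> b g h) = (f' = f \<otimes>\<^bsub>C2\<^esub> b)"
    by (auto simp: PiE_iff extensional_def fun_eq_iff)
qed

lemma card_H2_mult_card_coboundaries2:
  assumes "finite (carrier K)" "finite (carrier M)"
  shows "card (H2 K M act) * card (coboundaries2 K M act) = card (cocycles2 K M act)"
proof -
  have "finite (carrier C2)" using assms by (simp add: finite_PiE)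
  then show ?thesis unfolding H2_eq_cosets
    by (rule C2.card_cosets_mult_card_subgroup[OF _ subgroup_cocycles2 subgroup_coboundaries2
          coboundaries2_subset_cocycles2])
qed

lemma card_coboundaries1_pos: "finite (carrier M) \<Longrightarrow> 0 < card (coboundaries1 K M act)"
  unfolding coboundaries1_eq_image using M.one_closed by (auto simp: card_gt_0_iff)

lemma card_coboundaries2_pos:
  "finite (carrier K) \<Longrightarrow> finite (carrier M) \<Longrightarrow> 0 < card (coboundaries2 K M act)"
proof -
  assume "finite (carrier K)" "finite (carrier M)"
  then have "finite (coboundaries2 K M act)" unfolding coboundaries2_eq_image
    by (simp add: finite_PiE)
  moreover have "coboundary1 \<one>\<^bsub>C1\<^esub> \<in> coboundaries2 K M act"
    unfolding coboundaries2_eq_image by (rule imageI[OF C1.one_closed])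
  ultimately show ?thesis by (auto simp: card_gt_0_iff)
qed

lemma card_H1_pos: "finite (carrier K) \<Longrightarrow> finite (carrier M) \<Longrightarrow> 0 < card (H1 K M act)"
  using card_H1_mult_card_coboundaries1 subgroup.one_closed[OF subgroup_cocycles1] finite_cocycles1
  by (metis card_gt_0_iff empty_iff mult_is_0 not_gr_zero)

lemma card_H1_le_1:
  assumes "finite (carrier K)" "finite (carrier M)" "cocycles1 K M act \<subseteq> coboundaries1 K M act"
  shows "card (H1 K M act) \<le> 1"
proof -
  have "cocycles1 K M act = coboundaries1 K M act" using assms(3) coboundaries1_subset_cocycles1
    by blast
  then have "card (H1 K M act) * card (coboundaries1 K M act) = 1 * card (coboundaries1 K M act)"
    using card_H1_mult_card_coboundaries1[OF assms(1,2)] by simp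
  then show ?thesis using card_coboundaries1_pos[OF assms(2)] by simp
qed

lemma card_H2_le_1:
  assumes "finite (carrier K)" "finite (carrier M)" "cocycles2 K M act \<subseteq> coboundaries2 K M act"
  shows "card (H2 K M act) \<le> 1"
proof -
  have "cocycles2 K M act = coboundaries2 K M act" using assms(3) coboundaries2_subset_cocycles2
    by blast
  then have "card (H2 K M act) * card (coboundaries2 K M act) = 1 * card (coboundaries2 K M act)"
    using card_H2_mult_card_coboundaries2[OF assms(1,2)] by simp
  then show ?thesis using card_coboundaries2_pos[OF assms(1,2)] by simp
qed

lemma card_H1_H2_trivial_group:
  assumes K: "carrier K = {\<one>\<^bsub>K\<^esub>}" and fin: "finite (carrier M)"
  shows "card (H1 K M act) \<le> 1" "card (H2 K M act) \<le> 1"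
proof -
  have "cocycles1 K M act \<subseteq> coboundaries1 K M act"
  proof
    fix f assume f: "f \<in> cocycles1 K M act"
    then have "f (\<one>\<^bsub>K\<^esub> \<otimes>\<^bsub>K\<^esub> \<one>\<^bsub>K\<^esub>) = f \<one>\<^bsub>K\<^esub> \<otimes>\<^bsub>M\<^esub> act \<one>\<^bsub>K\<^esub> (f \<one>\<^bsub>K\<^esub>)"
      unfolding cocycles1_def by blast
    then have "f \<one>\<^bsub>K\<^esub> = \<one>\<^bsub>M\<^esub>" using f by (auto simp: cocycles1_def PiE_iff)
    then have "f = coboundary0 \<one>\<^bsub>M\<^esub>"
      using f K by (auto simp: cocycles1_def coboundary0_def PiE_iff extensional_def fun_eq_iff)
    then show "f \<in> coboundaries1 K M act" unfolding coboundaries1_eq_image by simp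
  qed
  then show "card (H1 K M act) \<le> 1" using card_H1_le_1 K fin by simp
  have "cocycles2 K M act \<subseteq> coboundaries2 K M act"
  proof
    fix f assume f: "f \<in> cocycles2 K M act"
    then have "f \<one>\<^bsub>K\<^esub> \<one>\<^bsub>K\<^esub> \<in> carrier M" by (auto simp: cocycles2_def PiE_iff)
    then have "f = coboundary1 (\<lambda>x\<in>carrier K. f \<one>\<^bsub>K\<^esub> \<one>\<^bsub>K\<^esub>)"
      using f K by (auto simp: cocycles2_def coboundary1_def PiE_iff extensional_def fun_eq_iff)
    moreover have "(\<lambda>x\<in>carrier K. f \<one>\<^bsub>K\<^esub> \<one>\<^bsub>K\<^esub>) \<in> carrier C1"
      using \<open>f \<one>\<^bsub>K\<^esub> \<one>\<^bsub>K\<^esub> \<in> carrier M\<close> by simp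
    ultimately show "f \<in> coboundaries2 K M act" unfolding coboundaries2_eq_image by blast
  qed
  then show "card (H2 K M act) \<le> 1" using card_H2_le_1 K fin by simp
qed

lemma cocycles1_closed: "u \<in> cocycles1 K M act \<Longrightarrow> g \<in> carrier K \<Longrightarrow> u g \<in> carrier M"
  by (auto simp: cocycles1_def)

lemma cocycles1_mult:
  "u \<in> cocycles1 K M act \<Longrightarrow> g \<in> carrier K \<Longrightarrow> k \<in> carrier K \<Longrightarrow>
    u (g \<otimes>\<^bsub>K\<^esub> k) = u g \<otimes>\<^bsub>M\<^esub> act g (u k)"
  by (auto simp: cocycles1_def)

lemma cocycles1_div:
  assumes "u \<in> cocycles1 K M act" "v \<in> cocycles1 K M act"
  shows "(\<lambda>x\<in>carrier K. u x \<otimes>\<^bsub>M\<^esub> inv\<^bsub>M\<^esub> (v x)) \<in> cocycles1 K M act"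
proof -
  have "v \<in> carrier K \<rightarrow>\<^sub>E carrier M" using assms(2) by (simp add: cocycles1_def)
  then have "u \<otimes>\<^bsub>C1\<^esub> inv\<^bsub>C1\<^esub> v = (\<lambda>x\<in>carrier K. u x \<otimes>\<^bsub>M\<^esub> inv\<^bsub>M\<^esub> (v x))"
    by (auto simp: C1_inv)
  moreover have "u \<otimes>\<^bsub>C1\<^esub> inv\<^bsub>C1\<^esub> v \<in> cocycles1 K M act"
    using assms by (meson subgroup.m_closed subgroup.m_inv_closed subgroup_cocycles1)
  ultimately show ?thesis by simp
qed

lemma cocycles2_closed:
  "u \<in> cocycles2 K M act \<Longrightarrow> g \<in> carrier K \<Longrightarrow> k \<in> carrier K \<Longrightarrow> u g k \<in> carrier M"
  by (auto simp: cocycles2_def PiE_iff)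

lemma cocycles2_eq:
  "u \<in> cocycles2 K M act \<Longrightarrow> g \<in> carrier K \<Longrightarrow> k \<in> carrier K \<Longrightarrow> l \<in> carrier K \<Longrightarrow>
    act g (u k l) \<otimes>\<^bsub>M\<^esub> u g (k \<otimes>\<^bsub>K\<^esub> l) = u (g \<otimes>\<^bsub>K\<^esub> k) l \<otimes>\<^bsub>M\<^esub> u g k"
  by (auto simp: cocycles2_def)

lemma cocycles2_carrier_C2: "u \<in> cocycles2 K M act \<Longrightarrow> u \<in> carrier K \<rightarrow>\<^sub>E carrier C1"
  by (auto simp: cocycles2_def)

lemma cocycles2_eqI:
  assumes u: "u \<in> cocycles2 K M act" and v: "v \<in> cocycles2 K M act"
    and eq: "\<And>g y. g \<in> carrier K \<Longrightarrow> y \<in> carrier K \<Longrightarrow> u g y = v g y"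
  shows "u = v"
proof (rule PiE_ext[OF cocycles2_carrier_C2[OF u] cocycles2_carrier_C2[OF v]])
  fix x assume x: "x \<in> carrier K"
  have "u x \<in> carrier K \<rightarrow>\<^sub>E carrier M" "v x \<in> carrier K \<rightarrow>\<^sub>E carrier M"
    using PiE_mem[OF cocycles2_carrier_C2[OF u] x] PiE_mem[OF cocycles2_carrier_C2[OF v] x]
    by simp_all
  then show "u x = v x" by (rule PiE_ext) (rule eq[OF x])
qed

lemma C2_inv_apply:
  assumes "v \<in> cocycles2 K M act" "x \<in> carrier K" "y \<in> carrier K"
  shows "(inv\<^bsub>C2\<^esub> v) x y = inv\<^bsub>M\<^esub> (v x y)"
  using assms cocycles2_carrier_C2[OF assms(1)] by (simp add: C2_inv)

lemma cocycles2_div: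
  assumes "u \<in> cocycles2 K M act" "v \<in> cocycles2 K M act"
  shows "u \<otimes>\<^bsub>C2\<^esub> inv\<^bsub>C2\<^esub> v \<in> cocycles2 K M act"
    and "x \<in> carrier K \<Longrightarrow> y \<in> carrier K \<Longrightarrow>
      (u \<otimes>\<^bsub>C2\<^esub> inv\<^bsub>C2\<^esub> v) x y = u x y \<otimes>\<^bsub>M\<^esub> inv\<^bsub>M\<^esub> (v x y)"
proof -
  show "u \<otimes>\<^bsub>C2\<^esub> inv\<^bsub>C2\<^esub> v \<in> cocycles2 K M act"
    using assms by (meson subgroup.m_closed subgroup.m_inv_closed subgroup_cocycles2)
  show "x \<in> carrier K \<Longrightarrow> y \<in> carrier K \<Longrightarrow>
      (u \<otimes>\<^bsub>C2\<^esub> inv\<^bsub>C2\<^esub> v) x y = u x y \<otimes>\<^bsub>M\<^esub> inv\<^bsub>M\<^esub> (v x y)"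
    using cocycles2_carrier_C2[OF assms(2)] by (simp add: C2_inv)
qed

end

section \<open>Adjoining one element to a subgroup\<close>

locale cyclic_extension = gmodule K M act
  for K :: "('g,'a) monoid_scheme" and M :: "('m,'b) monoid_scheme" and act +
  fixes A :: "'g set" and h :: 'g
  assumes K_comm: "\<And>x y. x \<in> carrier K \<Longrightarrow> y \<in> carrier K \<Longrightarrow> x \<otimes>\<^bsub>K\<^esub> y = y \<otimes>\<^bsub>K\<^esub> x"
    and A_subgroup: "subgroup A K" and h_carrier: "h \<in> carrier K"
    and decomp: "\<And>g. g \<in> carrier K \<Longrightarrow> \<exists>a\<in>A. \<exists>j::nat. g = a \<otimes>\<^bsub>K\<^esub> h [^]\<^bsub>K\<^esub> j"
    and finite_K: "finite (carrier K)" and finite_M: "finite (carrier M)"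
begin

abbreviation "KA \<equiv> K\<lparr>carrier := A\<rparr>"

sublocale KA: gmodule KA M act
  by unfold_locales (rule module_action_subgroup[OF module_action A_subgroup])

lemma A_carrier: "a \<in> A \<Longrightarrow> a \<in> carrier K"
  by (rule subgroup.mem_carrier[OF A_subgroup])

lemma finite_A: "finite A"
  using finite_subset[OF subgroup.subset[OF A_subgroup] finite_K] .

lemma cocycles1_trivial_of_A_h:
  assumes u: "u \<in> cocycles1 K M act" and uA: "\<forall>a\<in>A. u a = \<one>\<^bsub>M\<^esub>" and uh: "u h = \<one>\<^bsub>M\<^esub>"
  shows "\<forall>g\<in>carrier K. u g = \<one>\<^bsub>M\<^esub>"
proof
  have pow: "u (h [^]\<^bsub>K\<^esub> j) = \<one>\<^bsub>M\<^esub>" for j :: nat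
  proof (induction j)
    case 0 then show ?case using uA subgroup.one_closed[OF A_subgroup] by simp
  next
    case (Suc j) then show ?case
      using cocycles1_mult[OF u, of "h [^]\<^bsub>K\<^esub> j" h] h_carrier uh by (simp add: K.nat_pow_Suc)
  qed
  fix g assume "g \<in> carrier K"
  then obtain a j where a: "a \<in> A" and g: "g = a \<otimes>\<^bsub>K\<^esub> h [^]\<^bsub>K\<^esub> (j::nat)" using decomp by blast
  show "u g = \<one>\<^bsub>M\<^esub>" using cocycles1_mult[OF u, of a "h [^]\<^bsub>K\<^esub> j"] a A_carrier h_carrier pow uA g by simp
qed

lemma cocycles1_h_invariant:
  assumes u: "u \<in> cocycles1 K M act" and uA: "\<forall>a\<in>A. u a = \<one>\<^bsub>M\<^esub>"
  shows "u h \<in> invariants KA M act"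
proof -
  have "act a (u h) = u h" if a: "a \<in> A" for a
  proof -
    have "u (a \<otimes>\<^bsub>K\<^esub> h) = act a (u h)"
      using cocycles1_mult[OF u, of a h] a A_carrier h_carrier uA cocycles1_closed[OF u h_carrier]
      by simp
    moreover have "u (h \<otimes>\<^bsub>K\<^esub> a) = u h"
      using cocycles1_mult[OF u, of h a] a A_carrier h_carrier uA cocycles1_closed[OF u h_carrier]
      by simp
    ultimately show ?thesis using K_comm[OF A_carrier[OF a] h_carrier] by simp
  qed
  then show ?thesis using cocycles1_closed[OF u h_carrier] by (simp add: invariants_def)
qed

lemma cocycles1_eq_of_agree_on_A_h:
  assumes f: "f \<in> cocycles1 K M act" and f': "f' \<in> cocycles1 K M act"
    and A: "\<forall>a\<in>A. f a = f' a" and "f h = f' h"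
  shows "f = f'"
proof -
  have "\<forall>g\<in>carrier K. (\<lambda>x\<in>carrier K. f x \<otimes>\<^bsub>M\<^esub> inv\<^bsub>M\<^esub> (f' x)) g = \<one>\<^bsub>M\<^esub>"
    by (rule cocycles1_trivial_of_A_h[OF cocycles1_div[OF f f']])
      (use assms A_carrier h_carrier cocycles1_closed[OF f'] in auto)
  then have "\<forall>g\<in>carrier K. f g = f' g"
    using cocycles1_closed[OF f] cocycles1_closed[OF f'] M.mult_inv_eq_one_iff by auto
  then show ?thesis using f f' by (auto simp: cocycles1_def PiE_iff extensional_def fun_eq_iff)
qed

lemma cocycles1_div_h_invariant:
  assumes f: "f \<in> cocycles1 K M act" and f0: "f0 \<in> cocycles1 K M act" and A: "\<forall>a\<in>A. f a = f0 a"
  shows "f h \<otimes>\<^bsub>M\<^esub> inv\<^bsub>M\<^esub> (f0 h) \<in> invariants KA M act"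
  using cocycles1_h_invariant[OF cocycles1_div[OF f f0]] A A_carrier h_carrier
    cocycles1_closed[OF f0]
  by simp

lemma card_cocycles1_le:
  "card (cocycles1 K M act) \<le> card (cocycles1 KA M act) * card (invariants KA M act)"
proof (rule card_le_by_fibres[where \<phi>="\<lambda>f. restrict f A"])
  show "finite (cocycles1 K M act)" by (rule finite_cocycles1[OF finite_K finite_M])
  show "(\<lambda>f. restrict f A) ` cocycles1 K M act \<subseteq> cocycles1 KA M act"
    by (auto simp: cocycles1_def PiE_iff A_carrier subgroup.m_closed[OF A_subgroup])
  show "finite (cocycles1 KA M act)" using KA.finite_cocycles1 finite_A finite_M by simp
next
  fix f0 assume f0: "f0 \<in> cocycles1 K M act"
  let ?F = "{f \<in> cocycles1 K M act. restrict f A = restrict f0 A}"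
  have agree: "f \<in> cocycles1 K M act \<and> (\<forall>a\<in>A. f a = f0 a)" if "f \<in> ?F" for f
    using that by (metis (mono_tags, lifting) mem_Collect_eq restrict_apply')
  have "inj_on (\<lambda>f. f h \<otimes>\<^bsub>M\<^esub> inv\<^bsub>M\<^esub> (f0 h)) ?F"
  proof (rule inj_onI)
    fix f f' assume f: "f \<in> ?F" and f': "f' \<in> ?F"
      and eq: "f h \<otimes>\<^bsub>M\<^esub> inv\<^bsub>M\<^esub> (f0 h) = f' h \<otimes>\<^bsub>M\<^esub> inv\<^bsub>M\<^esub> (f0 h)"
    have "f h \<in> carrier M" "f' h \<in> carrier M" "f0 h \<in> carrier M"
      using agree[OF f] agree[OF f'] f0 cocycles1_closed h_carrier by auto
    then have "f h = f' h" using eq by (metis M.inv_closed M.r_cancel)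
    then show "f = f'" using cocycles1_eq_of_agree_on_A_h agree[OF f] agree[OF f'] by simp
  qed
  moreover have "(\<lambda>f. f h \<otimes>\<^bsub>M\<^esub> inv\<^bsub>M\<^esub> (f0 h)) ` ?F \<subseteq> invariants KA M act"
  proof (rule image_subsetI)
    fix f assume "f \<in> ?F"
    then show "f h \<otimes>\<^bsub>M\<^esub> inv\<^bsub>M\<^esub> (f0 h) \<in> invariants KA M act"
      using cocycles1_div_h_invariant[OF _ f0] agree by blast
  qed
  moreover have "finite (invariants KA M act)" using finite_M by (auto simp: invariants_def)
  ultimately show "card ?F \<le> card (invariants KA M act)" by (rule card_inj_on_le)
qed

lemma card_H1_le: "card (H1 K M act) \<le> card (H1 KA M act) * card (invariants K M act)"
proof -
  have fin_KA: "finite (carrier KA)" using finite_A by simp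
  have "card (H1 K M act) * card (coboundaries1 K M act) = card (cocycles1 K M act)"
    using card_H1_mult_card_coboundaries1[OF finite_K finite_M] .
  also have "\<dots> \<le> card (cocycles1 KA M act) * card (invariants KA M act)"
    by (rule card_cocycles1_le)
  also have "\<dots> = card (H1 KA M act) * (card (coboundaries1 KA M act) * card (invariants KA M act))"
    by (simp add: KA.card_H1_mult_card_coboundaries1[OF fin_KA finite_M, symmetric] mult.assoc)
  also have "\<dots> = card (H1 KA M act) * card (carrier M)"
    using KA.card_coboundaries1[OF finite_M] by simp
  also have "\<dots> = (card (H1 KA M act) * card (invariants K M act)) * card (coboundaries1 K M act)"
    using card_coboundaries1[OF finite_M] by (simp add: ac_simps)
  finally show ?thesis using card_coboundaries1_pos[OF finite_M] by simp
qed

abbreviation hpow :: "nat \<Rightarrow> 'g" where "hpow k \<equiv> h [^]\<^bsub>K\<^esub> k"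

lemma hpow_closed [simp]: "hpow k \<in> carrier K" using h_carrier by simp

definition "rel_ord = (LEAST k. 0 < k \<and> hpow k \<in> A)"

lemma rel_ord_props: "0 < rel_ord" "hpow rel_ord \<in> A" "\<And>k. 0 < k \<Longrightarrow> k < rel_ord \<Longrightarrow> hpow k \<notin> A"
proof -
  have ex: "0 < K.ord h \<and> hpow (K.ord h) \<in> A"
    using K.ord_ge_1[OF finite_K h_carrier] K.pow_ord_eq_1[OF h_carrier]
      subgroup.one_closed[OF A_subgroup] by simp
  have "0 < rel_ord \<and> hpow rel_ord \<in> A" unfolding rel_ord_def
    by (rule LeastI[of _ "K.ord h"]) (rule ex)
  then show "0 < rel_ord" "hpow rel_ord \<in> A" by auto
  show "\<And>k. 0 < k \<Longrightarrow> k < rel_ord \<Longrightarrow> hpow k \<notin> A"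
    using not_less_Least unfolding rel_ord_def by blast
qed

definition "res_kernel = {u \<in> cocycles2 K M act. \<forall>a\<in>A. \<forall>b\<in>A. u a b = \<one>\<^bsub>M\<^esub>}"

lemma res_kernel_normalised:
  assumes u: "u \<in> res_kernel" and x: "x \<in> carrier K"
  shows "u \<one>\<^bsub>K\<^esub> x = \<one>\<^bsub>M\<^esub>" "u x \<one>\<^bsub>K\<^esub> = \<one>\<^bsub>M\<^esub>"
proof -
  have uz: "u \<in> cocycles2 K M act" and u11: "u \<one>\<^bsub>K\<^esub> \<one>\<^bsub>K\<^esub> = \<one>\<^bsub>M\<^esub>"
    using u subgroup.one_closed[OF A_subgroup] by (auto simp: res_kernel_def)
  have "act \<one>\<^bsub>K\<^esub> (u \<one>\<^bsub>K\<^esub> x) \<otimes>\<^bsub>M\<^esub> u \<one>\<^bsub>K\<^esub> (\<one>\<^bsub>K\<^esub> \<otimes>\<^bsub>K\<^esub> x) = u (\<one>\<^bsub>K\<^esub> \<otimes>\<^bsub>K\<^esub> \<one>\<^bsub>K\<^esub>) x \<otimes>\<^bsub>M\<^esub> u \<one>\<^bsub>K\<^esub> \<one>\<^bsub>K\<^esub>"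
    using cocycles2_eq[OF uz K.one_closed K.one_closed x] by simp
  then have "u \<one>\<^bsub>K\<^esub> x \<otimes>\<^bsub>M\<^esub> u \<one>\<^bsub>K\<^esub> x = u \<one>\<^bsub>K\<^esub> x \<otimes>\<^bsub>M\<^esub> \<one>\<^bsub>M\<^esub>"
    using x cocycles2_closed[OF uz] u11 by simp
  then show "u \<one>\<^bsub>K\<^esub> x = \<one>\<^bsub>M\<^esub>" using x cocycles2_closed[OF uz] by (simp del: M.r_one)
  have "act x (u \<one>\<^bsub>K\<^esub> \<one>\<^bsub>K\<^esub>) \<otimes>\<^bsub>M\<^esub> u x (\<one>\<^bsub>K\<^esub> \<otimes>\<^bsub>K\<^esub> \<one>\<^bsub>K\<^esub>) = u (x \<otimes>\<^bsub>K\<^esub> \<one>\<^bsub>K\<^esub>) \<one>\<^bsub>K\<^esub> \<otimes>\<^bsub>M\<^esub> u x \<one>\<^bsub>K\<^esub>"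
    using cocycles2_eq[OF uz x K.one_closed K.one_closed] by simp
  then have "u x \<one>\<^bsub>K\<^esub> \<otimes>\<^bsub>M\<^esub> \<one>\<^bsub>M\<^esub> = u x \<one>\<^bsub>K\<^esub> \<otimes>\<^bsub>M\<^esub> u x \<one>\<^bsub>K\<^esub>"
    using x cocycles2_closed[OF uz] u11 by simp
  then show "u x \<one>\<^bsub>K\<^esub> = \<one>\<^bsub>M\<^esub>" using x cocycles2_closed[OF uz] by (simp del: M.r_one)
qed

primrec hprod :: "('g \<Rightarrow> 'g \<Rightarrow> 'm) \<Rightarrow> nat \<Rightarrow> 'm" where
  "hprod u 0 = \<one>\<^bsub>M\<^esub>"
| "hprod u (Suc k) = hprod u k \<otimes>\<^bsub>M\<^esub> u (hpow k) h"

lemma A_cancel_left: "a \<in> A \<Longrightarrow> x \<in> carrier K \<Longrightarrow> a \<otimes>\<^bsub>K\<^esub> x \<in> A \<Longrightarrow> x \<in> A"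
proof -
  assume a: "a \<in> A" and x: "x \<in> carrier K" and ax: "a \<otimes>\<^bsub>K\<^esub> x \<in> A"
  have "x = inv\<^bsub>K\<^esub> a \<otimes>\<^bsub>K\<^esub> (a \<otimes>\<^bsub>K\<^esub> x)" using a x A_carrier by (simp add: K.m_assoc[symmetric])
  then show "x \<in> A" using subgroup.m_closed[OF A_subgroup subgroup.m_inv_closed[OF A_subgroup a] ax]
    by simp
qed

lemma hprod_eq_one_below_rel_ord:
  assumes u: "u \<in> res_kernel"
    and uD: "\<And>g. g \<in> carrier K \<Longrightarrow> g \<otimes>\<^bsub>K\<^esub> h \<notin> A \<Longrightarrow> u g h = \<one>\<^bsub>M\<^esub>"
  shows "k < rel_ord \<Longrightarrow> hprod u k = \<one>\<^bsub>M\<^esub>"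
proof (induction k)
  case (Suc k)
  have "hpow k \<otimes>\<^bsub>K\<^esub> h \<notin> A" using rel_ord_props(3)[of "Suc k"] Suc.prems by simp
  then show ?case using Suc uD[of "hpow k"] by simp
qed simp

lemma res_kernel_A_hpow:
  assumes u: "u \<in> res_kernel"
    and uD: "\<And>g. g \<in> carrier K \<Longrightarrow> g \<otimes>\<^bsub>K\<^esub> h \<notin> A \<Longrightarrow> u g h = \<one>\<^bsub>M\<^esub>"
    and a: "a \<in> A"
  shows "k < rel_ord \<Longrightarrow> u a (hpow k) = \<one>\<^bsub>M\<^esub>"
proof (induction k)
  case 0 then show ?case using res_kernel_normalised[OF u A_carrier[OF a]] by simp
next
  case (Suc k)
  have uz: "u \<in> cocycles2 K M act" using u by (simp add: res_kernel_def)
  have nA: "hpow k \<otimes>\<^bsub>K\<^esub> h \<notin> A" using rel_ord_props(3)[of "Suc k"] Suc.prems by simp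
  have nA2: "(a \<otimes>\<^bsub>K\<^esub> hpow k) \<otimes>\<^bsub>K\<^esub> h \<notin> A"
  proof
    assume "(a \<otimes>\<^bsub>K\<^esub> hpow k) \<otimes>\<^bsub>K\<^esub> h \<in> A"
    then have "a \<otimes>\<^bsub>K\<^esub> (hpow k \<otimes>\<^bsub>K\<^esub> h) \<in> A" using A_carrier[OF a] h_carrier by (simp add: K.m_assoc)
    then show False using A_cancel_left[OF a] nA h_carrier by simp
  qed
  have "act a (u (hpow k) h) \<otimes>\<^bsub>M\<^esub> u a (hpow k \<otimes>\<^bsub>K\<^esub> h) = u (a \<otimes>\<^bsub>K\<^esub> hpow k) h \<otimes>\<^bsub>M\<^esub> u a (hpow k)"
    using cocycles2_eq[OF uz A_carrier[OF a] hpow_closed h_carrier] .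
  then show ?case
    using uD[OF hpow_closed nA] uD[OF _ nA2] Suc A_carrier[OF a] h_carrier cocycles2_closed[OF uz]
    by simp
qed

lemma res_kernel_trivial_at_h:
  assumes u: "u \<in> res_kernel"
    and uD: "\<And>g. g \<in> carrier K \<Longrightarrow> g \<otimes>\<^bsub>K\<^esub> h \<notin> A \<Longrightarrow> u g h = \<one>\<^bsub>M\<^esub>"
    and uS: "hprod u rel_ord = \<one>\<^bsub>M\<^esub>" and g: "g \<in> carrier K"
  shows "u g h = \<one>\<^bsub>M\<^esub>"
proof (cases "g \<otimes>\<^bsub>K\<^esub> h \<in> A")
  case False then show ?thesis using uD[OF g] by blast
next
  case True
  have uz: "u \<in> cocycles2 K M act" and uA: "\<And>a b. a \<in> A \<Longrightarrow> b \<in> A \<Longrightarrow> u a b = \<one>\<^bsub>M\<^esub>"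
    using u by (auto simp: res_kernel_def)
  note val = cocycles2_closed[OF uz]
  obtain m where m: "rel_ord = Suc m" using rel_ord_props(1) gr0_implies_Suc by blast
  have um: "u (hpow m) h = \<one>\<^bsub>M\<^esub>"
    using uS hprod_eq_one_below_rel_ord[OF u uD, of m] m val[OF hpow_closed h_carrier] by simp
  define a where "a = (g \<otimes>\<^bsub>K\<^esub> h) \<otimes>\<^bsub>K\<^esub> inv\<^bsub>K\<^esub> (hpow rel_ord)"
  have a: "a \<in> A" unfolding a_def
    using subgroup.m_closed[OF A_subgroup True subgroup.m_inv_closed[OF A_subgroup
      rel_ord_props(2)]] .
  have ga: "g = a \<otimes>\<^bsub>K\<^esub> hpow m"
  proof -
    have "a \<otimes>\<^bsub>K\<^esub> hpow m = (g \<otimes>\<^bsub>K\<^esub> h) \<otimes>\<^bsub>K\<^esub> (inv\<^bsub>K\<^esub> (hpow m \<otimes>\<^bsub>K\<^esub> h) \<otimes>\<^bsub>K\<^esub> hpow m)"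
      unfolding a_def m using g h_carrier by (simp add: K.m_assoc)
    also have "\<dots> = (g \<otimes>\<^bsub>K\<^esub> h) \<otimes>\<^bsub>K\<^esub> inv\<^bsub>K\<^esub> h"
      using g h_carrier by (simp add: K.inv_mult_group K.m_assoc)
    also have "\<dots> = g" using g h_carrier by (simp add: K.m_assoc)
    finally show ?thesis by simp
  qed
  have "act a (u (hpow m) h) \<otimes>\<^bsub>M\<^esub> u a (hpow m \<otimes>\<^bsub>K\<^esub> h) = u (a \<otimes>\<^bsub>K\<^esub> hpow m) h \<otimes>\<^bsub>M\<^esub> u a (hpow m)"
    using cocycles2_eq[OF uz A_carrier[OF a] hpow_closed h_carrier] .
  moreover have "u a (hpow m \<otimes>\<^bsub>K\<^esub> h) = \<one>\<^bsub>M\<^esub>" using uA[OF a] rel_ord_props(2) m by simp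
  moreover have "u a (hpow m) = \<one>\<^bsub>M\<^esub>" using res_kernel_A_hpow[OF u uD a, of m] m by simp
  ultimately show ?thesis using um ga A_carrier[OF a] h_carrier val by simp
qed

lemma res_kernel_trivial_of_trivial_at_h:
  assumes u: "u \<in> res_kernel" and uh: "\<And>g. g \<in> carrier K \<Longrightarrow> u g h = \<one>\<^bsub>M\<^esub>"
    and uc: "\<And>a. a \<in> A \<Longrightarrow> u h a = u a h"
  shows "g \<in> carrier K \<Longrightarrow> y \<in> carrier K \<Longrightarrow> u g y = \<one>\<^bsub>M\<^esub>"
proof -
  have uz: "u \<in> cocycles2 K M act" and uA: "\<And>a b. a \<in> A \<Longrightarrow> b \<in> A \<Longrightarrow> u a b = \<one>\<^bsub>M\<^esub>"
    using u by (auto simp: res_kernel_def)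
  note val = cocycles2_closed[OF uz]
  have hA: "u h a = \<one>\<^bsub>M\<^esub>" if "a \<in> A" for a using uc[OF that] uh[OF A_carrier[OF that]] by simp
  have A_hpow: "u (a' \<otimes>\<^bsub>K\<^esub> hpow j) a = \<one>\<^bsub>M\<^esub>" if a': "a' \<in> A" and a: "a \<in> A" for j a' a
    using a
  proof (induction j arbitrary: a)
    case 0 then show ?case using uA[OF a' 0] A_carrier[OF a'] by simp
  next
    case (Suc j)
    define g where "g = a' \<otimes>\<^bsub>K\<^esub> hpow j"
    have g: "g \<in> carrier K" unfolding g_def using A_carrier[OF a'] by simp
    have ac: "a \<in> carrier K" using A_carrier[OF Suc.prems] .
    have e1: "act g (u h a) \<otimes>\<^bsub>M\<^esub> u g (h \<otimes>\<^bsub>K\<^esub> a) = u (g \<otimes>\<^bsub>K\<^esub> h) a \<otimes>\<^bsub>M\<^esub> u g h"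
      using cocycles2_eq[OF uz g h_carrier ac] .
    have e2: "act g (u a h) \<otimes>\<^bsub>M\<^esub> u g (a \<otimes>\<^bsub>K\<^esub> h) = u (g \<otimes>\<^bsub>K\<^esub> a) h \<otimes>\<^bsub>M\<^esub> u g a"
      using cocycles2_eq[OF uz g ac h_carrier] .
    have "u g a = \<one>\<^bsub>M\<^esub>" using Suc.IH[OF Suc.prems] unfolding g_def .
    then have "u g (a \<otimes>\<^bsub>K\<^esub> h) = \<one>\<^bsub>M\<^esub>"
      using e2 uh hA[OF Suc.prems] uc[OF Suc.prems] g ac h_carrier val by simp
    then have "u (g \<otimes>\<^bsub>K\<^esub> h) a = \<one>\<^bsub>M\<^esub>"
      using e1 uh hA[OF Suc.prems] K_comm[OF h_carrier ac] g ac h_carrier val by simp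
    then show ?case unfolding g_def using A_carrier[OF a'] h_carrier by (simp add: K.m_assoc)
  qed
  have K_A: "u g a = \<one>\<^bsub>M\<^esub>" if "g \<in> carrier K" "a \<in> A" for g a
    using decomp[OF that(1)] A_hpow[OF _ that(2)] by blast
  have K_A_hpow: "u g (a \<otimes>\<^bsub>K\<^esub> hpow i) = \<one>\<^bsub>M\<^esub>" if g: "g \<in> carrier K" and a: "a \<in> A" for i g a
  proof (induction i)
    case 0 then show ?case using K_A[OF g a] A_carrier[OF a] by simp
  next
    case (Suc i)
    have x: "a \<otimes>\<^bsub>K\<^esub> hpow i \<in> carrier K" using A_carrier[OF a] by simp
    have "act g (u (a \<otimes>\<^bsub>K\<^esub> hpow i) h) \<otimes>\<^bsub>M\<^esub> u g ((a \<otimes>\<^bsub>K\<^esub> hpow i) \<otimes>\<^bsub>K\<^esub> h)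
        = u (g \<otimes>\<^bsub>K\<^esub> (a \<otimes>\<^bsub>K\<^esub> hpow i)) h \<otimes>\<^bsub>M\<^esub> u g (a \<otimes>\<^bsub>K\<^esub> hpow i)"
      using cocycles2_eq[OF uz g x h_carrier] .
    then have "u g ((a \<otimes>\<^bsub>K\<^esub> hpow i) \<otimes>\<^bsub>K\<^esub> h) = \<one>\<^bsub>M\<^esub>" using uh Suc x g h_carrier val by simp
    then show ?case using A_carrier[OF a] h_carrier by (simp add: K.m_assoc)
  qed
  show "g \<in> carrier K \<Longrightarrow> y \<in> carrier K \<Longrightarrow> u g y = \<one>\<^bsub>M\<^esub>" using decomp[of y] K_A_hpow by blast
qed

definition "comm_cocycle u = (\<lambda>a\<in>A. u h a \<otimes>\<^bsub>M\<^esub> inv\<^bsub>M\<^esub> (u a h))"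

lemma res_kernel_cocycles2: "u \<in> res_kernel \<Longrightarrow> u \<in> cocycles2 K M act" by (simp add: res_kernel_def)
lemma res_kernel_A: "u \<in> res_kernel \<Longrightarrow> a \<in> A \<Longrightarrow> b \<in> A \<Longrightarrow> u a b = \<one>\<^bsub>M\<^esub>" by (simp add: res_kernel_def)

lemma comm_cocycle_cocycles1:
  assumes u: "u \<in> res_kernel"
  shows "comm_cocycle u \<in> cocycles1 KA M act"
proof -
  note uz = res_kernel_cocycles2[OF u] note val = cocycles2_closed[OF uz]
  have "comm_cocycle u (a \<otimes>\<^bsub>K\<^esub> a') = comm_cocycle u a \<otimes>\<^bsub>M\<^esub> act a (comm_cocycle u a')" if a: "a \<in> A"
    and a': "a' \<in> A" for a a'
  proof -
    have ac: "a \<in> carrier K" "a' \<in> carrier K" using A_carrier a a' by auto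
    have aa: "a \<otimes>\<^bsub>K\<^esub> a' \<in> A" using subgroup.m_closed[OF A_subgroup a a'] .
    have ha: "h \<otimes>\<^bsub>K\<^esub> a = a \<otimes>\<^bsub>K\<^esub> h" "h \<otimes>\<^bsub>K\<^esub> a' = a' \<otimes>\<^bsub>K\<^esub> h" using K_comm h_carrier ac by auto
    have E1: "u h (a \<otimes>\<^bsub>K\<^esub> a') = u (a \<otimes>\<^bsub>K\<^esub> h) a' \<otimes>\<^bsub>M\<^esub> u h a"
      using cocycles2_eq[OF uz h_carrier ac(1) ac(2)] res_kernel_A[OF u a a'] ha h_carrier ac val
      by simp
    have E2: "act a (u h a') \<otimes>\<^bsub>M\<^esub> u a (a' \<otimes>\<^bsub>K\<^esub> h) = u (a \<otimes>\<^bsub>K\<^esub> h) a' \<otimes>\<^bsub>M\<^esub> u a h"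
      using cocycles2_eq[OF uz ac(1) h_carrier ac(2)] ha by simp
    have E3: "act a (u a' h) \<otimes>\<^bsub>M\<^esub> u a (a' \<otimes>\<^bsub>K\<^esub> h) = u (a \<otimes>\<^bsub>K\<^esub> a') h"
      using cocycles2_eq[OF uz ac(1) ac(2) h_carrier] res_kernel_A[OF u a a'] h_carrier ac val
      by simp
    have key: "u h (a \<otimes>\<^bsub>K\<^esub> a') \<otimes>\<^bsub>M\<^esub> u a h \<otimes>\<^bsub>M\<^esub> act a (u a' h) =
               u (a \<otimes>\<^bsub>K\<^esub> a') h \<otimes>\<^bsub>M\<^esub> u h a \<otimes>\<^bsub>M\<^esub> act a (u h a')"
    proof -
      have "u h (a \<otimes>\<^bsub>K\<^esub> a') \<otimes>\<^bsub>M\<^esub> u a h \<otimes>\<^bsub>M\<^esub> act a (u a' h) =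
            (u (a \<otimes>\<^bsub>K\<^esub> h) a' \<otimes>\<^bsub>M\<^esub> u a h) \<otimes>\<^bsub>M\<^esub> u h a \<otimes>\<^bsub>M\<^esub> act a (u a' h)"
        using E1 h_carrier ac val by (simp add: M.m_ac)
      also have "\<dots> = (act a (u h a') \<otimes>\<^bsub>M\<^esub> u a (a' \<otimes>\<^bsub>K\<^esub> h)) \<otimes>\<^bsub>M\<^esub> u h a \<otimes>\<^bsub>M\<^esub> act a (u a' h)"
        using E2 by simp
      also have "\<dots> = (act a (u a' h) \<otimes>\<^bsub>M\<^esub> u a (a' \<otimes>\<^bsub>K\<^esub> h)) \<otimes>\<^bsub>M\<^esub> u h a \<otimes>\<^bsub>M\<^esub> act a (u h a')"
        using h_carrier ac val by (simp add: M.m_ac)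
      also have "\<dots> = u (a \<otimes>\<^bsub>K\<^esub> a') h \<otimes>\<^bsub>M\<^esub> u h a \<otimes>\<^bsub>M\<^esub> act a (u h a')"
        using E3 by simp
      finally show ?thesis .
    qed
    have "u h (a \<otimes>\<^bsub>K\<^esub> a') \<otimes>\<^bsub>M\<^esub> inv\<^bsub>M\<^esub> (u (a \<otimes>\<^bsub>K\<^esub> a') h) =
        u h a \<otimes>\<^bsub>M\<^esub> inv\<^bsub>M\<^esub> (u a h) \<otimes>\<^bsub>M\<^esub> (act a (u h a') \<otimes>\<^bsub>M\<^esub> inv\<^bsub>M\<^esub> (act a (u a' h)))"
      by (rule M.div_eq_of_cross_mult[OF _ _ _ _ _ _ key]) (use h_carrier ac val in auto)
    then show ?thesis using a a' aa h_carrier ac val by (simp add: comm_cocycle_def)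
  qed
  then show ?thesis using val h_carrier A_carrier
    by (auto simp: cocycles1_def comm_cocycle_def PiE_iff)
qed

lemma hprod_closed: "u \<in> cocycles2 K M act \<Longrightarrow> hprod u k \<in> carrier M"
  by (induction k) (auto simp: cocycles2_closed h_carrier)

lemma hprod_Suc_left:
  assumes u: "u \<in> res_kernel"
  shows "hprod u (Suc k) = act h (hprod u k) \<otimes>\<^bsub>M\<^esub> u h (hpow k)"
proof (induction k)
  case 0 then show ?case using res_kernel_normalised[OF u h_carrier] h_carrier by simp
next
  case (Suc k)
  note uz = res_kernel_cocycles2[OF u] note val = cocycles2_closed[OF uz]
  have e: "act h (u (hpow k) h) \<otimes>\<^bsub>M\<^esub> u h (hpow k \<otimes>\<^bsub>K\<^esub> h) = u (h \<otimes>\<^bsub>K\<^esub> hpow k) h \<otimes>\<^bsub>M\<^esub> u h (hpow k)"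
    using cocycles2_eq[OF uz h_carrier hpow_closed h_carrier] .
  have c: "h \<otimes>\<^bsub>K\<^esub> hpow k = hpow k \<otimes>\<^bsub>K\<^esub> h" using K_comm[OF h_carrier hpow_closed] .
  have "hprod u (Suc (Suc k)) = act h (hprod u k) \<otimes>\<^bsub>M\<^esub> (u h (hpow k) \<otimes>\<^bsub>M\<^esub> u (hpow k \<otimes>\<^bsub>K\<^esub> h) h)"
    using Suc h_carrier val hprod_closed[OF uz] by (simp add: M.m_assoc)
  also have "\<dots> = act h (hprod u k) \<otimes>\<^bsub>M\<^esub> (act h (u (hpow k) h) \<otimes>\<^bsub>M\<^esub> u h (hpow k \<otimes>\<^bsub>K\<^esub> h))"
    using e c h_carrier val by (simp add: M.m_comm)
  also have "\<dots> = act h (hprod u (Suc k)) \<otimes>\<^bsub>M\<^esub> u h (hpow (Suc k))"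
    using h_carrier val hprod_closed[OF uz] by (simp add: M.m_assoc)
  finally show ?case .
qed

lemma hprod_act_A:
  assumes u: "u \<in> res_kernel" and uc: "\<And>a. a \<in> A \<Longrightarrow> u h a = u a h" and a: "a \<in> A"
  shows "act a (hprod u k) \<otimes>\<^bsub>M\<^esub> u a (hpow k) = hprod u k \<otimes>\<^bsub>M\<^esub> u (hpow k) a"
proof (induction k)
  case 0 then show ?case using res_kernel_normalised[OF u A_carrier[OF a]] A_carrier[OF a] by simp
next
  case (Suc k)
  note uz = res_kernel_cocycles2[OF u] note val = cocycles2_closed[OF uz]
  have ac: "a \<in> carrier K" using A_carrier[OF a] .
  have e1: "act a (u (hpow k) h) \<otimes>\<^bsub>M\<^esub> u a (hpow k \<otimes>\<^bsub>K\<^esub> h) = u (a \<otimes>\<^bsub>K\<^esub> hpow k) h \<otimes>\<^bsub>M\<^esub> u a (hpow k)"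
    using cocycles2_eq[OF uz ac hpow_closed h_carrier] .
  have e2: "act (hpow k) (u a h) \<otimes>\<^bsub>M\<^esub> u (hpow k) (a \<otimes>\<^bsub>K\<^esub> h) = u (hpow k \<otimes>\<^bsub>K\<^esub> a) h \<otimes>\<^bsub>M\<^esub> u (hpow k) a"
    using cocycles2_eq[OF uz hpow_closed ac h_carrier] .
  have e3: "act (hpow k) (u h a) \<otimes>\<^bsub>M\<^esub> u (hpow k) (h \<otimes>\<^bsub>K\<^esub> a) = u (hpow k \<otimes>\<^bsub>K\<^esub> h) a \<otimes>\<^bsub>M\<^esub> u (hpow k) h"
    using cocycles2_eq[OF uz hpow_closed h_carrier ac] .
  have key: "u (a \<otimes>\<^bsub>K\<^esub> hpow k) h \<otimes>\<^bsub>M\<^esub> u (hpow k) a = u (hpow k \<otimes>\<^bsub>K\<^esub> h) a \<otimes>\<^bsub>M\<^esub> u (hpow k) h"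
    using e2 e3 uc[OF a] K_comm[OF h_carrier ac] K_comm[OF hpow_closed ac] by simp
  have "act a (hprod u (Suc k)) \<otimes>\<^bsub>M\<^esub> u a (hpow (Suc k)) =
        act a (hprod u k) \<otimes>\<^bsub>M\<^esub> (act a (u (hpow k) h) \<otimes>\<^bsub>M\<^esub> u a (hpow k \<otimes>\<^bsub>K\<^esub> h))"
    using ac h_carrier val hprod_closed[OF uz] by (simp add: M.m_assoc)
  also have "\<dots> = (act a (hprod u k) \<otimes>\<^bsub>M\<^esub> u a (hpow k)) \<otimes>\<^bsub>M\<^esub> u (a \<otimes>\<^bsub>K\<^esub> hpow k) h"
    using e1 ac h_carrier val hprod_closed[OF uz] by (simp add: M.m_ac)
  also have "\<dots> = hprod u k \<otimes>\<^bsub>M\<^esub> (u (a \<otimes>\<^bsub>K\<^esub> hpow k) h \<otimes>\<^bsub>M\<^esub> u (hpow k) a)"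
    using Suc ac h_carrier val hprod_closed[OF uz] by (simp add: M.m_ac)
  also have "\<dots> = hprod u k \<otimes>\<^bsub>M\<^esub> (u (hpow k \<otimes>\<^bsub>K\<^esub> h) a \<otimes>\<^bsub>M\<^esub> u (hpow k) h)"
    using key by simp
  also have "\<dots> = hprod u (Suc k) \<otimes>\<^bsub>M\<^esub> u (hpow (Suc k)) a"
    using ac h_carrier val hprod_closed[OF uz] by (simp add: M.m_ac)
  finally show ?case .
qed

lemma hprod_invariant:
  assumes u: "u \<in> res_kernel" and uc: "\<And>a. a \<in> A \<Longrightarrow> u h a = u a h"
  shows "hprod u rel_ord \<in> invariants K M act"
proof -
  note uz = res_kernel_cocycles2[OF u] note val = cocycles2_closed[OF uz]
  let ?S = "hprod u rel_ord"
  have Sc: "?S \<in> carrier M" using hprod_closed[OF uz] .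
  have th: "act h ?S = ?S"
  proof -
    have "hprod u (Suc rel_ord) = ?S \<otimes>\<^bsub>M\<^esub> u (hpow rel_ord) h" by simp
    moreover have "hprod u (Suc rel_ord) = act h ?S \<otimes>\<^bsub>M\<^esub> u h (hpow rel_ord)"
      using hprod_Suc_left[OF u] .
    ultimately show ?thesis using uc[OF rel_ord_props(2)] val[OF hpow_closed h_carrier] Sc h_carrier
      by (metis M.r_cancel act_closed)
  qed
  have ta: "act a ?S = ?S" if a: "a \<in> A" for a
    using hprod_act_A[OF u uc a, of rel_ord] res_kernel_A[OF u a rel_ord_props(2)]
      res_kernel_A[OF u rel_ord_props(2) a] Sc A_carrier[OF a] by simp
  have tj: "act (hpow j) ?S = ?S" for j
  proof (induction j)
    case 0 then show ?case using Sc by simp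
  next
    case (Suc j) then show ?case using act_comp[OF hpow_closed h_carrier Sc] th by simp
  qed
  have "act g ?S = ?S" if g: "g \<in> carrier K" for g
  proof -
    obtain a j where a: "a \<in> A" and gj: "g = a \<otimes>\<^bsub>K\<^esub> hpow j" using decomp[OF g] by blast
    show ?thesis using act_comp[OF A_carrier[OF a] hpow_closed Sc] tj ta[OF a] gj by simp
  qed
  then show ?thesis using Sc by (simp add: invariants_def)
qed

lemma res_kernel_div:
  assumes u: "u \<in> res_kernel" and v: "v \<in> res_kernel"
  shows "u \<otimes>\<^bsub>C2\<^esub> inv\<^bsub>C2\<^esub> v \<in> res_kernel"
  using cocycles2_div(1)[OF res_kernel_cocycles2[OF u] res_kernel_cocycles2[OF v]]
    C2_inv_apply[OF res_kernel_cocycles2[OF v]]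
    res_kernel_A[OF u] res_kernel_A[OF v] A_carrier by (simp add: res_kernel_def)

lemma comm_cocycle_div:
  assumes u: "u \<in> res_kernel" and v: "v \<in> res_kernel" and a: "a \<in> A"
  shows "comm_cocycle (u \<otimes>\<^bsub>C2\<^esub> inv\<^bsub>C2\<^esub> v) a = comm_cocycle u a \<otimes>\<^bsub>M\<^esub> inv\<^bsub>M\<^esub> (comm_cocycle v a)"
proof -
  note uz = res_kernel_cocycles2[OF u] and vz = res_kernel_cocycles2[OF v]
  have ac: "a \<in> carrier K" using A_carrier[OF a] .
  show ?thesis
    using cocycles2_div(2)[OF uz vz] a ac h_carrier cocycles2_closed[OF uz] cocycles2_closed[OF vz]
    by (simp add: comm_cocycle_def M.inv_mult M.m_ac)
qed

lemma hprod_div: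
  assumes u: "u \<in> cocycles2 K M act" and v: "v \<in> cocycles2 K M act"
  shows "hprod (u \<otimes>\<^bsub>C2\<^esub> inv\<^bsub>C2\<^esub> v) k = hprod u k \<otimes>\<^bsub>M\<^esub> inv\<^bsub>M\<^esub> (hprod v k)"
proof (induction k)
  case 0 then show ?case by simp
next
  case (Suc k) then show ?case
    using cocycles2_div(2)[OF u v hpow_closed h_carrier] hprod_closed[OF u] hprod_closed[OF v]
      cocycles2_closed[OF u] cocycles2_closed[OF v] h_carrier
    by (simp add: M.inv_mult M.m_ac)
qed

lemma finite_res_kernel: "finite res_kernel"
  using finite_cocycles2[OF finite_K finite_M]
  by (rule finite_subset[rotated]) (auto simp: res_kernel_def)

lemma comm_cocycle_eq_imp_symmetric:
  assumes u: "u \<in> res_kernel" and v: "v \<in> res_kernel" and e: "comm_cocycle u = comm_cocycle v"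
    and a: "a \<in> A"
  shows "(u \<otimes>\<^bsub>C2\<^esub> inv\<^bsub>C2\<^esub> v) h a = (u \<otimes>\<^bsub>C2\<^esub> inv\<^bsub>C2\<^esub> v) a h"
proof -
  note vz = res_kernel_cocycles2[OF v]
  let ?w = "u \<otimes>\<^bsub>C2\<^esub> inv\<^bsub>C2\<^esub> v"
  have w: "?w \<in> res_kernel" using res_kernel_div[OF u v] .
  have cv: "comm_cocycle v a \<in> carrier M" using cocycles2_closed[OF vz] h_carrier A_carrier[OF a] a
    by (simp add: comm_cocycle_def)
  have "comm_cocycle ?w a = comm_cocycle v a \<otimes>\<^bsub>M\<^esub> inv\<^bsub>M\<^esub> (comm_cocycle v a)"
    using comm_cocycle_div[OF u v a] e by simp
  then have "comm_cocycle ?w a = \<one>\<^bsub>M\<^esub>" using cv by simp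
  then have "?w h a \<otimes>\<^bsub>M\<^esub> inv\<^bsub>M\<^esub> (?w a h) = \<one>\<^bsub>M\<^esub>" using a by (simp add: comm_cocycle_def)
  then show ?thesis
    using M.mult_inv_eq_one_iff cocycles2_closed[OF res_kernel_cocycles2[OF w]] h_carrier
      A_carrier[OF a] by simp
qed

definition "free_args = {g \<in> carrier K. g \<otimes>\<^bsub>K\<^esub> h \<notin> A} - {\<one>\<^bsub>K\<^esub>}"

text \<open>Only the values \<open>u(g,h)\<close> with \<open>gh \<notin> A\<close>, \<open>g \<noteq> 1\<close> are recorded: \<open>u(1,h) = 1\<close>
  (lemma \<open>res_kernel_normalised\<close>), and the values with \<open>gh \<in> A\<close> are recovered from
  \<open>hprod u rel_ord\<close> through the cocycle identity (lemma \<open>res_kernel_trivial_at_h\<close>).\<close>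
definition "encode u = ((\<lambda>g\<in>free_args. u g h), (comm_cocycle u, hprod u rel_ord))"

lemma inj_on_encode: "inj_on encode res_kernel"
proof (rule inj_onI)
  fix u v assume u: "u \<in> res_kernel" and v: "v \<in> res_kernel" and e: "encode u = encode v"
  note uz = res_kernel_cocycles2[OF u] and vz = res_kernel_cocycles2[OF v]
  let ?w = "u \<otimes>\<^bsub>C2\<^esub> inv\<^bsub>C2\<^esub> v"
  have w: "?w \<in> res_kernel" using res_kernel_div[OF u v] .
  have w_apply: "?w g y = u g y \<otimes>\<^bsub>M\<^esub> inv\<^bsub>M\<^esub> (v g y)" if "g \<in> carrier K" "y \<in> carrier K" for g y
    using cocycles2_div(2)[OF uz vz that] .
  have e1: "(\<lambda>g\<in>free_args. u g h) = (\<lambda>g\<in>free_args. v g h)"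
    and e2: "comm_cocycle u = comm_cocycle v" and e3: "hprod u rel_ord = hprod v rel_ord"
    using e by (auto simp: encode_def)
  have wD: "?w g h = \<one>\<^bsub>M\<^esub>" if g: "g \<in> carrier K" "g \<otimes>\<^bsub>K\<^esub> h \<notin> A" for g
  proof (cases "g = \<one>\<^bsub>K\<^esub>")
    case True then show ?thesis using res_kernel_normalised(1)[OF w h_carrier] by simp
  next
    case False
    then have "g \<in> free_args" using g by (simp add: free_args_def)
    then have "u g h = v g h" using e1 by (metis restrict_apply')
    then show ?thesis using w_apply[OF g(1) h_carrier] cocycles2_closed[OF vz g(1) h_carrier]
      by simp
  qed
  have "hprod ?w rel_ord = \<one>\<^bsub>M\<^esub>" using hprod_div[OF uz vz] e3 hprod_closed[OF vz] by simp
  then have "?w g h = \<one>\<^bsub>M\<^esub>" if "g \<in> carrier K" for g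
    using res_kernel_trivial_at_h[OF w wD _ that] by blast
  then have w_one: "?w g y = \<one>\<^bsub>M\<^esub>" if "g \<in> carrier K" "y \<in> carrier K" for g y
    using res_kernel_trivial_of_trivial_at_h[OF w _ comm_cocycle_eq_imp_symmetric[OF u v e2] that]
    by blast
  have "u g y = v g y" if "g \<in> carrier K" "y \<in> carrier K" for g y
  proof -
    have "u g y \<otimes>\<^bsub>M\<^esub> inv\<^bsub>M\<^esub> (v g y) = \<one>\<^bsub>M\<^esub>" by (metis w_one w_apply that)
    then show ?thesis
      using M.mult_inv_eq_one_iff[OF cocycles2_closed[OF uz that] cocycles2_closed[OF vz that]]
      by simp
  qed
  then show "u = v" by (rule cocycles2_eqI[OF uz vz])
qed

definition "comm_data = (\<lambda>u. (comm_cocycle u, hprod u rel_ord)) ` res_kernel"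

lemma card_comm_data_le: "card comm_data \<le> card (cocycles1 KA M act) * card (invariants K M act)"
proof (rule card_le_by_fibres[where \<phi>=fst])
  show "finite comm_data" unfolding comm_data_def using finite_res_kernel by simp
  show "fst ` comm_data \<subseteq> cocycles1 KA M act" unfolding comm_data_def using comm_cocycle_cocycles1
    by auto
  show "finite (cocycles1 KA M act)" using KA.finite_cocycles1 finite_A finite_M by simp
next
  fix s assume "s \<in> comm_data"
  then obtain u0 where u0: "u0 \<in> res_kernel" and s: "s = (comm_cocycle u0, hprod u0 rel_ord)"
    unfolding comm_data_def by auto
  let ?F = "{s' \<in> comm_data. fst s' = fst s}"
  let ?m = "\<lambda>s'. snd s' \<otimes>\<^bsub>M\<^esub> inv\<^bsub>M\<^esub> (hprod u0 rel_ord)"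
  have S0: "hprod u0 rel_ord \<in> carrier M" using hprod_closed[OF res_kernel_cocycles2[OF u0]] .
  have Pc: "snd p \<in> carrier M" if "p \<in> comm_data" for p using that hprod_closed res_kernel_cocycles2
    unfolding comm_data_def by auto
  have inj: "inj_on ?m ?F"
  proof (rule inj_onI)
    fix p q assume p: "p \<in> ?F" and q: "q \<in> ?F" and e: "?m p = ?m q"
    have pq: "p \<in> comm_data" "q \<in> comm_data" using p q by auto
    have "snd p = snd q"
      using M.r_cancel[of "inv\<^bsub>M\<^esub> (hprod u0 rel_ord)" "snd p" "snd q"] e Pc[OF pq(1)] Pc[OF pq(2)] S0
      by simp
    moreover have "fst p = fst q" using p q by simp
    ultimately show "p = q" by (simp add: prod_eq_iff)
  qed
  have sub: "?m ` ?F \<subseteq> invariants K M act"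
  proof
    fix x assume "x \<in> ?m ` ?F"
    then obtain p where p: "p \<in> ?F" and x: "x = ?m p" by auto
    obtain u where u: "u \<in> res_kernel" and pu: "p = (comm_cocycle u, hprod u rel_ord)" using p
      unfolding comm_data_def by auto
    have e: "comm_cocycle u = comm_cocycle u0" using p pu s by simp
    let ?w = "u \<otimes>\<^bsub>C2\<^esub> inv\<^bsub>C2\<^esub> u0"
    have "hprod ?w rel_ord \<in> invariants K M act"
      by (rule hprod_invariant[OF res_kernel_div[OF u u0]])
        (rule comm_cocycle_eq_imp_symmetric[OF u u0 e])
    then show "x \<in> invariants K M act"
      using hprod_div[OF res_kernel_cocycles2[OF u] res_kernel_cocycles2[OF u0]] x pu by simp
  qed
  have fi: "finite (invariants K M act)" using finite_M by (auto simp: invariants_def)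
  show "card ?F \<le> card (invariants K M act)" by (rule card_inj_on_le[OF inj sub fi])
qed

lemma card_free_args:
  assumes hA: "h \<notin> A"
  shows "card free_args + card A + 1 = card (carrier K)"
proof -
  let ?I = "(\<lambda>a. a \<otimes>\<^bsub>K\<^esub> inv\<^bsub>K\<^esub> h) ` A"
  have I: "{g \<in> carrier K. g \<otimes>\<^bsub>K\<^esub> h \<in> A} = ?I"
  proof (intro equalityI subsetI)
    fix g assume "g \<in> {g \<in> carrier K. g \<otimes>\<^bsub>K\<^esub> h \<in> A}"
    then have g: "g \<in> carrier K" "g \<otimes>\<^bsub>K\<^esub> h \<in> A" by auto
    have "g = (g \<otimes>\<^bsub>K\<^esub> h) \<otimes>\<^bsub>K\<^esub> inv\<^bsub>K\<^esub> h" using g h_carrier by (simp add: K.m_assoc)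
    then show "g \<in> ?I" using g by blast
  next
    fix g assume "g \<in> ?I"
    then obtain a where a: "a \<in> A" "g = a \<otimes>\<^bsub>K\<^esub> inv\<^bsub>K\<^esub> h" by auto
    then show "g \<in> {g \<in> carrier K. g \<otimes>\<^bsub>K\<^esub> h \<in> A}" using A_carrier[OF a(1)] h_carrier
      by (simp add: K.m_assoc)
  qed
  have cI: "card ?I = card A"
    by (rule card_image) (use A_carrier h_carrier in \<open>auto simp: inj_on_def\<close>)
  have IK: "?I \<subseteq> carrier K" using A_carrier h_carrier by auto
  have D: "free_args = (carrier K - ?I) - {\<one>\<^bsub>K\<^esub>}" unfolding free_args_def using I by blast
  have "\<one>\<^bsub>K\<^esub> \<notin> ?I"
  proof
    assume "\<one>\<^bsub>K\<^esub> \<in> ?I"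
    then obtain a where a: "a \<in> A" "\<one>\<^bsub>K\<^esub> = a \<otimes>\<^bsub>K\<^esub> inv\<^bsub>K\<^esub> h" by auto
    have "a = (a \<otimes>\<^bsub>K\<^esub> inv\<^bsub>K\<^esub> h) \<otimes>\<^bsub>K\<^esub> h" using A_carrier[OF a(1)] h_carrier by (simp add: K.m_assoc)
    also have "\<dots> = \<one>\<^bsub>K\<^esub> \<otimes>\<^bsub>K\<^esub> h" by (simp only: a(2)[symmetric])
    finally have "a = h" using h_carrier by simp
    then show False using a(1) hA by simp
  qed
  then have one: "\<one>\<^bsub>K\<^esub> \<in> carrier K - ?I" by simp
  have "card free_args = card (carrier K - ?I) - 1" unfolding D using one finite_K by simp
  moreover have "card (carrier K - ?I) = card (carrier K) - card A"
    using card_Diff_subset[OF finite_subset[OF IK finite_K] IK] cI by simp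
  moreover have "card (carrier K - ?I) \<ge> 1"
  proof -
    have "card (carrier K - ?I) \<noteq> 0" using one finite_K by auto
    then show ?thesis by simp
  qed
  moreover have "card A \<le> card (carrier K)"
    using card_mono[OF finite_K subgroup.subset[OF A_subgroup]] .
  ultimately show ?thesis by linarith
qed

lemma card_res_kernel_le:
  shows "card res_kernel \<le> card (carrier M) ^ card free_args * card comm_data"
proof -
  have fD: "finite free_args" using finite_K by (simp add: free_args_def)
  have fP: "finite comm_data" unfolding comm_data_def using finite_res_kernel by simp
  have sub: "encode ` res_kernel \<subseteq> (free_args \<rightarrow>\<^sub>E carrier M) \<times> comm_data"
  proof
    fix x assume "x \<in> encode ` res_kernel"
    then obtain u where u: "u \<in> res_kernel" and x: "x = encode u" by auto
    have "(\<lambda>g\<in>free_args. u g h) \<in> free_args \<rightarrow>\<^sub>E carrier M"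
      unfolding restrict_PiE_iff using cocycles2_closed[OF res_kernel_cocycles2[OF u] _ h_carrier]
      by (auto simp: free_args_def)
    moreover have "(comm_cocycle u, hprod u rel_ord) \<in> comm_data" using u unfolding comm_data_def
      by blast
    ultimately show "x \<in> (free_args \<rightarrow>\<^sub>E carrier M) \<times> comm_data" unfolding x encode_def by simp
  qed
  have "card res_kernel \<le> card ((free_args \<rightarrow>\<^sub>E carrier M) \<times> comm_data)"
    by (rule card_inj_on_le[OF inj_on_encode sub])
      (rule finite_cartesian_product[OF finite_PiE[OF fD] fP], use finite_M in auto)
  also have "\<dots> = card (carrier M) ^ card free_args * card comm_data"
    by (simp add: card_cartesian_product card_PiE[OF fD])
  finally show ?thesis .
qed

definition "restrict2 f = (\<lambda>x\<in>A. \<lambda>y\<in>A. f x y)"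

lemma card_cocycles2_le: "card (cocycles2 K M act) \<le> card (cocycles2 KA M act) * card res_kernel"
proof (rule card_le_by_fibres[where \<phi>=restrict2])
  show "finite (cocycles2 K M act)" by (rule finite_cocycles2[OF finite_K finite_M])
  show "restrict2 ` cocycles2 K M act \<subseteq> cocycles2 KA M act"
    using A_carrier subgroup.m_closed[OF A_subgroup]
    by (auto simp: cocycles2_def restrict2_def PiE_iff)
  show "finite (cocycles2 KA M act)" using KA.finite_cocycles2 finite_A finite_M by simp
next
  fix f0 assume f0: "f0 \<in> cocycles2 K M act"
  let ?F = "{f \<in> cocycles2 K M act. restrict2 f = restrict2 f0}"
  let ?m = "\<lambda>f. f \<otimes>\<^bsub>C2\<^esub> inv\<^bsub>C2\<^esub> f0"
  have Zc: "f \<in> carrier C2" if "f \<in> cocycles2 K M act" for f using that cocycles2_carrier_C2 by simp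
  have inj: "inj_on ?m ?F"
  proof (rule inj_onI)
    fix f f' assume f: "f \<in> ?F" and f': "f' \<in> ?F" and e: "?m f = ?m f'"
    have c: "f \<in> carrier C2" "f' \<in> carrier C2" "inv\<^bsub>C2\<^esub> f0 \<in> carrier C2"
      using Zc f f' C2.inv_closed[OF Zc[OF f0]] by auto
    show "f = f'" by (rule C2.r_cancel[OF e c(1) c(2) c(3)])
  qed
  have sub: "?m ` ?F \<subseteq> res_kernel"
  proof
    fix x assume "x \<in> ?m ` ?F"
    then obtain f where f: "f \<in> ?F" and x: "x = ?m f" by auto
    have fz: "f \<in> cocycles2 K M act" using f by simp
    have "f a b = f0 a b" if "a \<in> A" "b \<in> A" for a b
    proof -
      have "restrict2 f a b = restrict2 f0 a b" using f by simp
      then show ?thesis using that by (simp add: restrict2_def)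
    qed
    then show "x \<in> res_kernel"
      using cocycles2_div(1)[OF fz f0] C2_inv_apply[OF f0] cocycles2_closed[OF f0] A_carrier x
      by (simp add: res_kernel_def)
  qed
  show "card ?F \<le> card res_kernel" by (rule card_inj_on_le[OF inj sub finite_res_kernel])
qed

lemma carrier_eq_A_of_h_in_A:
  assumes "h \<in> A"
  shows "carrier K = A"
proof
  show "carrier K \<subseteq> A"
  proof
    fix g assume "g \<in> carrier K"
    then obtain a j where a: "a \<in> A" and g: "g = a \<otimes>\<^bsub>K\<^esub> hpow j" using decomp by blast
    have "hpow j \<in> A"
      using assms
      by (induction j)
        (auto intro: subgroup.m_closed[OF A_subgroup] subgroup.one_closed[OF A_subgroup])
    then show "g \<in> A" using g a subgroup.m_closed[OF A_subgroup] by simp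
  qed
qed (rule subgroup.subset[OF A_subgroup])

lemma card_res_kernel_bound:
  "card res_kernel \<le> card (carrier M) ^ card free_args *
    (card (cocycles1 KA M act) * card (invariants K M act))"
  using card_res_kernel_le card_comm_data_le by (meson le_trans mult_le_mono2)

lemma card_H2_le: "card (H2 K M act) \<le> card (H2 KA M act) * card (H1 K M act)"
proof (cases "h \<in> A")
  case True
  then have "KA = K" using carrier_eq_A_of_h_in_A by simp
  then show ?thesis using card_H1_pos[OF finite_K finite_M] by simp
next
  case False
  have fA: "finite (carrier KA)" using finite_A by simp
  let ?m = "card (carrier M)"
  have c1: "card (H2 K M act) * card (coboundaries2 K M act) = card (cocycles2 K M act)"
    using card_H2_mult_card_coboundaries2[OF finite_K finite_M] .
  have c2: "card (H2 KA M act) * card (coboundaries2 KA M act) = card (cocycles2 KA M act)"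
    using KA.card_H2_mult_card_coboundaries2[OF fA finite_M] .
  have c3: "card (coboundaries2 KA M act) * card (cocycles1 KA M act) = ?m ^ card A"
    using KA.card_coboundaries2[OF fA finite_M] by simp
  have c4: "card (coboundaries2 K M act) * card (cocycles1 K M act) = ?m ^ card (carrier K)"
    using card_coboundaries2[OF finite_K finite_M] .
  have c5: "card (H1 K M act) * card (coboundaries1 K M act) = card (cocycles1 K M act)"
    using card_H1_mult_card_coboundaries1[OF finite_K finite_M] .
  have c6: "card (coboundaries1 K M act) * card (invariants K M act) = ?m"
    using card_coboundaries1[OF finite_M] .
  have c7: "card free_args + card A + 1 = card (carrier K)" using card_free_args[OF False] .
  have "card (H2 K M act) * ?m ^ card (carrier K)
      = card (cocycles2 K M act) * card (cocycles1 K M act)"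
    using c1 c4 by (metis mult.assoc)
  also have "\<dots> \<le> (card (cocycles2 KA M act) * card res_kernel) * card (cocycles1 K M act)"
    using card_cocycles2_le by simp
  also have "\<dots> \<le> (card (cocycles2 KA M act)
      * (?m ^ card free_args * (card (cocycles1 KA M act) * card (invariants K M act))))
      * card (cocycles1 K M act)"
    using card_res_kernel_bound by simp
  also have "\<dots> = card (H2 KA M act) * card (H1 K M act) *
      ((card (coboundaries2 KA M act) * card (cocycles1 KA M act)) * ?m ^ card free_args *
       (card (coboundaries1 K M act) * card (invariants K M act)))"
    unfolding c2[symmetric] c5[symmetric] by (simp add: ac_simps)
  also have "\<dots> = card (H2 KA M act) * card (H1 K M act) * ?m ^ card (carrier K)"
    unfolding c3 c6 c7[symmetric] by (simp add: power_add ac_simps)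
  finally have "card (H2 K M act) * ?m ^ card (carrier K)
      \<le> card (H2 KA M act) * card (H1 K M act) * ?m ^ card (carrier K)" .
  moreover have "0 < ?m ^ card (carrier K)" using finite_M M.one_closed
    by (metis card_gt_0_iff empty_iff zero_less_power)
  ultimately show ?thesis using mult_le_cancel2 by blast
qed

end

section \<open>Adjoining the generators one at a time\<close>

lemma (in group) subgroup_nat_pow_closed: "subgroup H G \<Longrightarrow> x \<in> H \<Longrightarrow> x [^] (n::nat) \<in> H"
  by (induction n) (auto intro: subgroup.m_closed subgroup.one_closed)

lemma (in group) inv_eq_pow_ord_minus_1:
  assumes "finite (carrier G)" "h \<in> carrier G"
  shows "inv h = h [^] (ord h - 1)"
proof -
  have "h [^] (ord h - 1) \<otimes> h = h [^] ord h"
    using ord_ge_1[OF assms] assms(2) nat_pow_Suc[of h "ord h - 1"] by simp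
  then show ?thesis using assms(2) by (metis inv_equality nat_pow_closed pow_ord_eq_1)
qed

lemma (in comm_group) generate_subset_mult_powers:
  assumes fin: "finite (carrier G)" and A: "subgroup A G" and h: "h \<in> carrier G" and H: "H \<subseteq> A \<union>
    {h}"
  shows "generate G H \<subseteq> {a \<otimes> h [^] (j::nat) | a j. a \<in> A}"
proof
  fix g assume "g \<in> generate G H"
  then show "g \<in> {a \<otimes> h [^] (j::nat) | a j. a \<in> A}"
  proof induction
    case one
    have "\<one> = \<one> \<otimes> h [^] (0::nat)" by simp
    then show ?case using subgroup.one_closed[OF A] by blast
  next
    case (incl g)
    then consider "g \<in> A" | "g = h" using H by blast
    then show ?case
    proof cases
      case 1 then have "g = g \<otimes> h [^] (0::nat)" using subgroup.mem_carrier[OF A] by simp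
      then show ?thesis using 1 by blast
    next
      case 2 then have "g = \<one> \<otimes> h [^] (1::nat)" using h by simp
      then show ?thesis using subgroup.one_closed[OF A] by blast
    qed
  next
    case (inv g)
    then consider "g \<in> A" | "g = h" using H by blast
    then show ?case
    proof cases
      case 1 then have "inv g = inv g \<otimes> h [^] (0::nat)" using subgroup.mem_carrier[OF A] by simp
      then show ?thesis using subgroup.m_inv_closed[OF A 1] by blast
    next
      case 2 then have "inv g = \<one> \<otimes> h [^] (ord h - 1)" using h inv_eq_pow_ord_minus_1[OF fin h]
        by simp
      then show ?thesis using subgroup.one_closed[OF A] by blast
    qed
  next
    case (eng g1 g2)
    then obtain a1 j1 a2 j2 where a: "a1 \<in> A" "a2 \<in> A"
      and g: "g1 = a1 \<otimes> h [^] (j1::nat)" "g2 = a2 \<otimes> h [^] (j2::nat)" by blast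
    have "a1 \<in> carrier G" "a2 \<in> carrier G" using a subgroup.mem_carrier[OF A] by auto
    then have "g1 \<otimes> g2 = (a1 \<otimes> a2) \<otimes> h [^] (j1 + j2)"
      using h by (simp add: g nat_pow_mult[symmetric] m_ac)
    then show ?case using subgroup.m_closed[OF A a] by blast
  qed
qed

lemma invariants_generate_insert_trivial:
  assumes ma: "module_action G M act" and x: "x \<in> carrier G" and S: "S \<subseteq> carrier G"
    and triv: "\<forall>s\<in>S. \<forall>m\<in>carrier M. act s m = m"
  shows "invariants (G\<lparr>carrier := generate G (insert x S)\<rparr>) M act = {m \<in> carrier M. act x m = m}"
proof (intro equalityI subsetI)
  fix m assume "m \<in> invariants (G\<lparr>carrier := generate G (insert x S)\<rparr>) M act"
  moreover have "x \<in> generate G (insert x S)" by (rule generate.incl) simp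
  ultimately show "m \<in> {m \<in> carrier M. act x m = m}" by (auto simp: invariants_def)
next
  fix m assume m: "m \<in> {m \<in> carrier M. act x m = m}"
  interpret gmodule G M act by unfold_locales (rule ma)
  have "\<forall>g\<in>generate G (insert x S). act g m = m"
    by (rule act_generate_trivial) (use x S m triv in auto)
  then show "m \<in> invariants (G\<lparr>carrier := generate G (insert x S)\<rparr>) M act"
    using m by (auto simp: invariants_def)
qed

lemma card_H_generate_insert:
  assumes G: "comm_group G" and fin_G: "finite (carrier G)" and fin_M: "finite (carrier M)"
    and ma: "module_action G M act" and S: "S \<subseteq> carrier G" and h: "h \<in> carrier G"
  shows "card (H1 (G\<lparr>carrier := generate G (insert h S)\<rparr>) M act)
      \<le> card (H1 (G\<lparr>carrier := generate G S\<rparr>) M act)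
        * card (invariants (G\<lparr>carrier := generate G (insert h S)\<rparr>) M act)"
    and "card (H2 (G\<lparr>carrier := generate G (insert h S)\<rparr>) M act)
      \<le> card (H2 (G\<lparr>carrier := generate G S\<rparr>) M act)
        * card (H1 (G\<lparr>carrier := generate G (insert h S)\<rparr>) M act)"
proof -
  interpret G: comm_group G by fact
  let ?K = "G\<lparr>carrier := generate G (insert h S)\<rparr>"
  have sub: "subgroup (generate G (insert h S)) G"
    by (rule G.generate_is_subgroup) (use S h in auto)
  have subS: "subgroup (generate G S) G" by (rule G.generate_is_subgroup[OF S])
  have mono: "generate G S \<subseteq> generate G (insert h S)" by (rule G.mono_generate) auto
  have decomp: "generate G (insert h S) \<subseteq> {a \<otimes>\<^bsub>G\<^esub> h [^]\<^bsub>G\<^esub> (j::nat) | a j. a \<in> generate G S}"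
    by (rule G.generate_subset_mult_powers[OF fin_G subS h]) (auto intro: generate.incl)
  interpret cyclic_extension ?K M act "generate G S" h
  proof (intro cyclic_extension.intro gmodule.intro cyclic_extension_axioms.intro)
    show "module_action ?K M act" by (rule module_action_subgroup[OF ma sub])
    show "\<And>a b. a \<in> carrier ?K \<Longrightarrow> b \<in> carrier ?K \<Longrightarrow> a \<otimes>\<^bsub>?K\<^esub> b = b \<otimes>\<^bsub>?K\<^esub> a"
      using subgroup.subset[OF sub] G.m_comm by auto
    show "subgroup (generate G S) ?K" by (rule G.subgroup_incl[OF subS sub mono])
    show "h \<in> carrier ?K" by (simp add: generate.incl)
    show "\<And>g. g \<in> carrier ?K \<Longrightarrow> \<exists>a\<in>generate G S. \<exists>j::nat. g = a \<otimes>\<^bsub>?K\<^esub> h [^]\<^bsub>?K\<^esub> j"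
      using decomp by (auto simp: G.nat_pow_consistent[symmetric])
    show "finite (carrier ?K)" using finite_subset[OF subgroup.subset[OF sub] fin_G] by simp
  qed (rule fin_M)
  have "KA = G\<lparr>carrier := generate G S\<rparr>" by simp
  then show "card (H1 ?K M act)
      \<le> card (H1 (G\<lparr>carrier := generate G S\<rparr>) M act) * card (invariants ?K M act)"
    and "card (H2 ?K M act)
      \<le> card (H2 (G\<lparr>carrier := generate G S\<rparr>) M act) * card (H1 ?K M act)"
    using card_H1_le card_H2_le by simp_all
qed

lemma card_H_generate_insert_le:
  fixes M :: "('m,'b) monoid_scheme" and act :: "'g \<Rightarrow> 'm \<Rightarrow> 'm" and x :: 'g and n :: nat
  defines "c \<equiv> card {m \<in> carrier M. act x m = m}"
  assumes G: "comm_group G" and fin_G: "finite (carrier G)" and fin_M: "finite (carrier M)"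
    and ma: "module_action G M act" and S: "S \<subseteq> carrier G" and h: "h \<in> carrier G"
    and x: "x \<in> insert h S" and triv: "\<forall>s\<in>insert h S - {x}. \<forall>m\<in>carrier M. act s m = m"
    and H1_S: "card (H1 (G\<lparr>carrier := generate G S\<rparr>) M act) \<le> c ^ n"
    and H2_S: "card (H2 (G\<lparr>carrier := generate G S\<rparr>) M act) \<le> c ^ n\<^sup>2"
  shows "card (H1 (G\<lparr>carrier := generate G (insert h S)\<rparr>) M act) \<le> c ^ Suc n"
    and "card (H2 (G\<lparr>carrier := generate G (insert h S)\<rparr>) M act) \<le> c ^ (Suc n)\<^sup>2"
proof -
  let ?K = "G\<lparr>carrier := generate G (insert h S)\<rparr>"
  have xc: "x \<in> carrier G" using x S h by auto
  have eq: "insert x (insert h S - {x}) = insert h S" using x by auto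
  have "insert h S - {x} \<subseteq> carrier G" using S h by auto
  from invariants_generate_insert_trivial[OF ma xc this triv]
  have "invariants ?K M act = {m \<in> carrier M. act x m = m}" unfolding eq .
  then have "card (H1 ?K M act) \<le> card (H1 (G\<lparr>carrier := generate G S\<rparr>) M act) * c"
    using card_H_generate_insert(1)[OF G fin_G fin_M ma S h] c_def by simp
  also have "\<dots> \<le> c ^ n * c" using H1_S by (rule mult_le_mono1)
  finally show H1: "card (H1 ?K M act) \<le> c ^ Suc n" by (simp add: ac_simps)
  have c_pos: "1 \<le> c"
  proof -
    interpret gmodule G M act by unfold_locales (rule ma)
    have "\<one>\<^bsub>M\<^esub> \<in> {m \<in> carrier M. act x m = m}" using xc by simp
    then show ?thesis using fin_M by (simp add: c_def Suc_le_eq card_gt_0_iff) blast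
  qed
  have "card (H2 ?K M act) \<le> card (H2 (G\<lparr>carrier := generate G S\<rparr>) M act) * card (H1 ?K M act)"
    by (rule card_H_generate_insert(2)[OF G fin_G fin_M ma S h])
  also have "\<dots> \<le> c ^ n\<^sup>2 * c ^ Suc n" using H2_S H1 by (rule mult_le_mono)
  also have "\<dots> = c ^ (n\<^sup>2 + Suc n)" by (simp add: power_add)
  also have "\<dots> \<le> c ^ (Suc n)\<^sup>2" by (rule power_increasing[OF _ c_pos]) (simp add: power2_eq_square)
  finally show "card (H2 ?K M act) \<le> c ^ (Suc n)\<^sup>2" .
qed

lemma card_H_generate_le:
  fixes M :: "('m,'b) monoid_scheme" and act :: "'g \<Rightarrow> 'm \<Rightarrow> 'm" and x :: 'g
  defines "c \<equiv> card {m \<in> carrier M. act x m = m}"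
  assumes G: "comm_group G" and fin_G: "finite (carrier G)" and fin_M: "finite (carrier M)"
    and ma: "module_action G M act" and x: "x \<in> carrier G" and hs: "set hs \<subseteq> carrier G"
    and triv: "\<forall>h\<in>set hs. \<forall>m\<in>carrier M. act h m = m"
  shows "card (H1 (G\<lparr>carrier := generate G (insert x (set hs))\<rparr>) M act) \<le> c ^ Suc (length hs)
    \<and> card (H2 (G\<lparr>carrier := generate G (insert x (set hs))\<rparr>) M act) \<le> c ^ (Suc (length hs))\<^sup>2"
  using hs triv
proof (induction hs)
  case Nil
  interpret G: comm_group G by fact
  let ?K0 = "G\<lparr>carrier := generate G {}\<rparr>"
  have "module_action ?K0 M act"
    by (rule module_action_subgroup[OF ma G.generate_is_subgroup]) simp
  moreover have "carrier ?K0 = {\<one>\<^bsub>?K0\<^esub>}" using G.generate_empty by simp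
  ultimately have "card (H1 ?K0 M act) \<le> 1" "card (H2 ?K0 M act) \<le> 1"
    using gmodule.card_H1_H2_trivial_group[OF gmodule.intro _ fin_M] by blast+
  then show ?case using card_H_generate_insert_le[OF G fin_G fin_M ma _ x, of "{}" x 0] c_def
    by simp
next
  case (Cons h l)
  have "insert x (set (h # l)) = insert h (insert x (set l))" by auto
  moreover have "\<forall>s\<in>insert h (insert x (set l)) - {x}. \<forall>m\<in>carrier M. act s m = m"
    using Cons.prems(2) by auto
  ultimately show ?case
    using card_H_generate_insert_le[OF G fin_G fin_M ma _ _ _ _, of "insert x (set l)" h x "Suc
      (length l)"]
      Cons x c_def by simp
qed

lemma card_H_le_of_adapted_generators:
  assumes G: "comm_group G" and fin_G: "finite (carrier G)" and fin_M: "finite (carrier M)"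
    and ma: "module_action G M act" and x: "x \<in> carrier G" and hs: "set hs \<subseteq> carrier G"
    and triv: "\<forall>h\<in>set hs. \<forall>m\<in>carrier M. act h m = m"
    and gen: "generate G (insert x (set hs)) = carrier G"
  shows "card (H1 G M act) \<le> card (invariants G M act) ^ Suc (length hs)
    \<and> card (H2 G M act) \<le> card (invariants G M act) ^ (Suc (length hs))\<^sup>2"
  using card_H_generate_le[OF G fin_G fin_M ma x hs triv]
    invariants_generate_insert_trivial[OF ma x hs triv]
    gen by simp

section \<open>A generator modulo a subgroup with cyclic quotient\<close>

definition generates_modulo :: "('g,'a) monoid_scheme \<Rightarrow> 'g set \<Rightarrow> 'g \<Rightarrow> bool" where
  "generates_modulo G H x \<longleftrightarrow>
     x \<in> carrier G \<and> (\<forall>g\<in>carrier G. \<exists>k::nat. g \<otimes>\<^bsub>G\<^esub> inv\<^bsub>G\<^esub> (x [^]\<^bsub>G\<^esub> k) \<in> H)"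

lemma (in comm_group) cyclic_quotient_generates_modulo:
  assumes fin: "finite (carrier G)" and H: "subgroup H G" and cyc: "cyclic_group (G Mod H)"
  shows "\<exists>x. generates_modulo G H x"
proof -
  interpret N: normal H G by (rule subgroup_imp_normal[OF H])
  have gQ: "group (G Mod H)" using N.factorgroup_is_group .
  obtain xH where xH: "xH \<in> carrier (G Mod H)" and gen: "subgroup_generated (G Mod H) {xH} = G Mod
    H"
    using cyc unfolding cyclic_group_def by blast
  have finQ: "finite (carrier (G Mod H))"
    using fin by (simp add: FactGroup_def RCOSETS_def)
  have "carrier (G Mod H) = generate (G Mod H) {xH}"
    using arg_cong[OF gen, of carrier] xH by (simp add: subgroup_generated_def)
  also have "\<dots> = {xH [^]\<^bsub>G Mod H\<^esub> k | k. k \<in> (UNIV :: nat set)}"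
    using group.generate_pow_on_finite_carrier[OF gQ finQ xH] .
  finally have powers: "carrier (G Mod H) = {xH [^]\<^bsub>G Mod H\<^esub> k | k. k \<in> (UNIV :: nat set)}" .
  obtain x where x: "x \<in> carrier G" "xH = H #> x"
    using xH by (auto simp: FactGroup_def RCOSETS_def)
  have "\<exists>k::nat. g \<otimes> inv (x [^] k) \<in> H" if g: "g \<in> carrier G" for g
  proof -
    have "H #> g \<in> carrier (G Mod H)" using g by (auto simp: FactGroup_def RCOSETS_def)
    then obtain k :: nat where "H #> g = xH [^]\<^bsub>G Mod H\<^esub> k" using powers by auto
    also have "\<dots> = H #> (x [^] k)" using N.FactGroup_pow[OF x(1)] x(2) by simp
    finally have "g \<in> H #> (x [^] k)" using rcos_self[OF g H] by simp
    then have "g \<otimes> inv (x [^] k) \<in> H" using subgroup.rcos_module_imp[OF H is_group] x(1) by simp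
    then show ?thesis by blast
  qed
  then show ?thesis using x(1) unfolding generates_modulo_def by blast
qed

lemma (in group) pow_in_subgroup_iff_dvd:
  assumes fin: "finite (carrier G)" and H: "subgroup H G" and x: "x \<in> carrier G"
  shows "\<exists>N>0. \<forall>n::nat. x [^] n \<in> H \<longleftrightarrow> N dvd n"
proof -
  define N where "N = (LEAST n::nat. 0 < n \<and> x [^] n \<in> H)"
  have "0 < ord x \<and> x [^] ord x \<in> H"
    using ord_ge_1[OF fin x] pow_ord_eq_1[OF x] subgroup.one_closed[OF H] by simp
  then have N: "0 < N \<and> x [^] N \<in> H" unfolding N_def by (rule LeastI)
  have N_least: "\<And>n. 0 < n \<Longrightarrow> n < N \<Longrightarrow> x [^] n \<notin> H" unfolding N_def using not_less_Least by blast
  have multiple: "x [^] (N * q) \<in> H" for q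
    using subgroup_nat_pow_closed[OF H, of "x [^] N" q] N x by (simp add: nat_pow_pow)
  have "x [^] n \<in> H \<longleftrightarrow> N dvd n" for n
  proof
    assume xn: "x [^] n \<in> H"
    have "x [^] n = x [^] (N * (n div N)) \<otimes> x [^] (n mod N)"
      using x by (simp add: nat_pow_mult)
    then have "x [^] (n mod N) = inv (x [^] (N * (n div N))) \<otimes> x [^] n"
      using x by (simp add: m_assoc[symmetric])
    also have "\<dots> \<in> H" using subgroup.m_closed[OF H subgroup.m_inv_closed[OF H multiple] xn] .
    finally have "x [^] (n mod N) \<in> H" .
    then have "n mod N = 0" using N_least[of "n mod N"] N by (meson mod_less_divisor neq0_conv)
    then show "N dvd n" by auto
  qed (auto simp: multiple)
  then show ?thesis using N by blast
qed

lemma (in comm_group) generates_modulo_of_congruent: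
  assumes H: "subgroup H G" and x0: "generates_modulo G H x0" and g: "g \<in> carrier G"
    and congr: "x0 \<otimes> inv (g [^] (a::nat)) \<in> H"
  shows "generates_modulo G H g"
proof -
  have x0c: "x0 \<in> carrier G" using x0 by (simp add: generates_modulo_def)
  define h where "h = x0 \<otimes> inv (g [^] a)"
  have hc: "h \<in> carrier G" using congr subgroup.mem_carrier[OF H] by (auto simp: h_def)
  have x0_eq: "x0 = h \<otimes> g [^] a" using x0c g by (simp add: h_def m_assoc)
  have "\<exists>k::nat. y \<otimes> inv (g [^] k) \<in> H" if y: "y \<in> carrier G" for y
  proof -
    obtain t :: nat where t: "y \<otimes> inv (x0 [^] t) \<in> H"
      using x0 y by (auto simp: generates_modulo_def)
    have "y \<otimes> inv (g [^] (a * t)) = (y \<otimes> inv (x0 [^] t)) \<otimes> h [^] t"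
      using y g hc by (simp add: x0_eq nat_pow_distrib nat_pow_pow inv_mult m_ac mult_inv_cancel)
    also have "\<dots> \<in> H" using subgroup.m_closed[OF H t subgroup_nat_pow_closed[OF H]] congr h_def
      by simp
    finally show ?thesis by blast
  qed
  then show ?thesis using g by (simp add: generates_modulo_def)
qed

lemma (in comm_group) generating_set_pow_notin_subgroup:
  assumes H: "subgroup H G" and S: "S \<subseteq> carrier G" and gen: "generate G S = carrier G"
    and x: "x \<in> carrier G" "x [^] (n::nat) \<notin> H"
  shows "\<exists>g\<in>S. g [^] n \<notin> H"
proof (rule ccontr)
  assume "\<not> (\<exists>g\<in>S. g [^] n \<notin> H)"
  then have "S \<subseteq> {g \<in> carrier G. g [^] n \<in> H}" using S by auto
  moreover have "subgroup {g \<in> carrier G. g [^] n \<in> H} G"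
  proof (rule subgroupI)
    fix a assume "a \<in> {g \<in> carrier G. g [^] n \<in> H}" then show "inv a \<in> {g \<in> carrier G. g [^] n \<in> H}"
      using subgroup.m_inv_closed[OF H] by (auto simp: nat_pow_inv)
  next
    fix a b assume "a \<in> {g \<in> carrier G. g [^] n \<in> H}" "b \<in> {g \<in> carrier G. g [^] n \<in> H}"
    then show "a \<otimes> b \<in> {g \<in> carrier G. g [^] n \<in> H}"
      using subgroup.m_closed[OF H] by (auto simp: nat_pow_distrib)
  qed (use subgroup.one_closed[OF H] in auto)
  ultimately have "carrier G \<subseteq> {g \<in> carrier G. g [^] n \<in> H}"
    using generate_subgroup_incl gen by metis
  then show False using x by auto
qed

lemma (in comm_group) congruent_pow_of_coprime:
  assumes H: "subgroup H G" and x: "x \<in> carrier G" and xN: "x [^] N \<in> H"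
    and h: "h \<in> H" and g: "g = h \<otimes> x [^] (k::nat)" and cop: "coprime k N" and k: "k \<noteq> 0"
  shows "\<exists>a::nat. x \<otimes> inv (g [^] a) \<in> H"
proof -
  obtain a b where ab: "k * a = N * b + 1" using bezout_nat[OF k, of N] cop by auto
  have hc: "h \<in> carrier G" using h subgroup.mem_carrier[OF H] by auto
  have "x [^] (k * a) = x [^] (N * b) \<otimes> x" using x by (simp add: ab)
  then have "g [^] a = h [^] a \<otimes> (x [^] (N * b) \<otimes> x)"
    using hc x by (simp add: g nat_pow_distrib nat_pow_pow)
  then have "x \<otimes> inv (g [^] a) = inv (h [^] a \<otimes> (x [^] N) [^] b)"
    using hc x by (simp add: inv_mult m_ac mult_inv_cancel nat_pow_pow)
  also have "\<dots> \<in> H"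
    using subgroup.m_inv_closed[OF H subgroup.m_closed[OF H subgroup_nat_pow_closed[OF H h]
          subgroup_nat_pow_closed[OF H xN]]] .
  finally show ?thesis by blast
qed

text \<open>If \<open>x0\<close> has order \<open>p^e\<close> modulo \<open>H\<close> with \<open>e > 0\<close>, some generator \<open>g\<close> has \<open>g^(p^(e-1)) \<notin> H\<close>;
  writing \<open>g = x0^k\<close> modulo \<open>H\<close>, this forces \<open>p\<close> not to divide \<open>k\<close>, so \<open>x0\<close> is in turn a power
  of \<open>g\<close> modulo \<open>H\<close>.\<close>
lemma (in comm_group) generating_set_generates_modulo:
  assumes fin: "finite (carrier G)" and p: "Factorial_Ring.prime (p::nat)" and ord: "order G = p ^
    m"
    and H: "subgroup H G" and x0: "generates_modulo G H x0"
    and S: "S \<subseteq> carrier G" and gen: "generate G S = carrier G" and ne: "S \<noteq> {}"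
  shows "\<exists>x\<in>S. generates_modulo G H x"
proof -
  have x0c: "x0 \<in> carrier G" using x0 by (simp add: generates_modulo_def)
  obtain N where N: "0 < N" "\<And>n::nat. x0 [^] n \<in> H \<longleftrightarrow> N dvd n"
    using pow_in_subgroup_iff_dvd[OF fin H x0c] by blast
  have "N dvd p ^ m" using N(2) pow_order_eq_1[OF x0c] subgroup.one_closed[OF H] ord by metis
  then obtain e where e: "N = p ^ e" using divides_primepow_nat[OF p] by blast
  show ?thesis
  proof (cases e)
    case 0
    obtain g where g: "g \<in> S" using ne by blast
    have "x0 \<otimes> inv (g [^] (0::nat)) \<in> H" using N(2)[of 1] e 0 x0c by simp
    then show ?thesis using generates_modulo_of_congruent[OF H x0] g S by blast
  next
    case (Suc e')
    have "\<not> N dvd p ^ e'" using power_dvd_imp_le[of p "Suc e'" e'] prime_gt_1_nat[OF p] e Suc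
      by auto
    then obtain g where g: "g \<in> S" "g [^] (p ^ e') \<notin> H"
      using generating_set_pow_notin_subgroup[OF H S gen x0c] N(2) by blast
    have gc: "g \<in> carrier G" using g S by auto
    obtain k :: nat where k: "g \<otimes> inv (x0 [^] k) \<in> H" using x0 gc
      by (auto simp: generates_modulo_def)
    define h where "h = g \<otimes> inv (x0 [^] k)"
    have h: "h \<in> H" "h \<in> carrier G" using k subgroup.mem_carrier[OF H] by (auto simp: h_def)
    have g_eq: "g = h \<otimes> x0 [^] k" using gc x0c by (simp add: h_def m_assoc)
    have npk: "\<not> p dvd k"
    proof
      assume "p dvd k"
      then obtain k' where k': "k = p * k'" by blast
      have "g [^] (p ^ e') = h [^] (p ^ e') \<otimes> x0 [^] (N * k')"
        using h x0c by (simp add: g_eq nat_pow_distrib nat_pow_pow k' e Suc ac_simps)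
      also have "\<dots> \<in> H"
        using subgroup.m_closed[OF H subgroup_nat_pow_closed[OF H h(1)]] N(2) by simp
      finally show False using g(2) by simp
    qed
    have "coprime k N" using prime_imp_coprime[OF p npk] e by (simp add: coprime_commute)
    moreover have "k \<noteq> 0" using npk by (metis dvd_0_right)
    moreover have "x0 [^] N \<in> H" using N(2) by simp
    ultimately obtain a :: nat where "x0 \<otimes> inv (g [^] a) \<in> H"
      using congruent_pow_of_coprime[OF H x0c _ h(1) g_eq] by blast
    then show ?thesis using generates_modulo_of_congruent[OF H x0 gc] g(1) by blast
  qed
qed

lemma (in comm_group) generating_list_adapted:
  assumes H: "subgroup H G" and x: "x \<in> set gs" and gm: "generates_modulo G H x"
    and gs: "set gs \<subseteq> carrier G" and gen: "generate G (set gs) = carrier G"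
  shows "\<exists>hs. Suc (length hs) = length gs \<and> set hs \<subseteq> H \<and> generate G (insert x (set hs)) = carrier G"
proof -
  have xc: "x \<in> carrier G" using gm by (simp add: generates_modulo_def)
  define k where "k g = (SOME k::nat. g \<otimes> inv (x [^] k) \<in> H)" for g
  have k: "g \<otimes> inv (x [^] k g) \<in> H" if "g \<in> carrier G" for g
    unfolding k_def using gm that by (auto simp: generates_modulo_def intro: someI_ex)
  define hs where "hs = map (\<lambda>g. g \<otimes> inv (x [^] k g)) (remove1 x gs)"
  have rem: "set (remove1 x gs) \<subseteq> carrier G" using gs set_remove1_subset by fastforce
  have hsH: "set hs \<subseteq> H" unfolding hs_def using k rem by auto
  have len: "Suc (length hs) = length gs"
    unfolding hs_def using x length_remove1[of x gs] length_pos_if_in_set[OF x] by simp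
  let ?S = "generate G (insert x (set hs))"
  have sub: "subgroup ?S G"
    by (rule generate_is_subgroup) (use xc hsH subgroup.subset[OF H] in auto)
  have xS: "x \<in> ?S" by (rule generate.incl) simp
  have "g \<in> ?S" if g: "g \<in> set gs" for g
  proof (cases "g = x")
    case False
    then have "g \<otimes> inv (x [^] k g) \<in> ?S"
      using g unfolding hs_def by (intro generate.incl) (simp add: in_set_remove1)
    moreover have "g = (g \<otimes> inv (x [^] k g)) \<otimes> x [^] k g"
      using g gs xc by (auto simp: m_assoc)
    ultimately show ?thesis
      using subgroup.m_closed[OF sub _ subgroup_nat_pow_closed[OF sub xS]] by metis
  qed (use xS in simp)
  then have "?S = carrier G"
    using generate_subgroup_incl[OF _ sub] gen subgroup.subset[OF sub] by blast
  then show ?thesis using len hsH by blast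
qed

lemma (in comm_group) exists_adapted_generators:
  assumes fin: "finite (carrier G)" and p: "Factorial_Ring.prime (p::nat)" and ord: "order G = p ^
    m"
    and H: "subgroup H G" and cyc: "cyclic_group (G Mod H)"
    and gs: "set gs \<subseteq> carrier G" "generate G (set gs) = carrier G" "gs \<noteq> []"
  shows "\<exists>x hs. x \<in> carrier G \<and> set hs \<subseteq> H \<and> Suc (length hs) = length gs
    \<and> generate G (insert x (set hs)) = carrier G"
proof -
  obtain x0 where "generates_modulo G H x0" using cyclic_quotient_generates_modulo[OF fin H cyc]
    by blast
  then obtain x where x: "x \<in> set gs" "generates_modulo G H x"
    using generating_set_generates_modulo[OF fin p ord H _ gs(1,2)] gs(3) by blast
  then have "x \<in> carrier G" by (simp add: generates_modulo_def)
  then show ?thesis using generating_list_adapted[OF H x gs(1,2)] by blast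
qed

theorem lemma2p4:
  fixes G :: "('g,'a) monoid_scheme" and M :: "('m,'b) monoid_scheme"
    and act :: "'g \<Rightarrow> 'm \<Rightarrow> 'm" and p d :: nat and H0 :: "'g set"
  assumes "comm_group G" and "p_group p G"
    and "comm_group M" and "p_group p M"
    and "\<exists>gs. length gs = d \<and> set gs \<subseteq> carrier G \<and> generate G (set gs) = carrier G"
    and "module_action G M act"
    and "subgroup H0 G" and "cyclic_group (G Mod H0)"
    and "\<forall>h\<in>H0. \<forall>m\<in>carrier M. act h m = m"
  shows "card (H1 G M act) \<le> card (invariants G M act) ^ d \<and>
         card (H2 G M act) \<le> card (invariants G M act) ^ (d^2)"
proof -
  interpret G: comm_group G by fact
  obtain gs where gs: "length gs = d" "set gs \<subseteq> carrier G" "generate G (set gs) = carrier G"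
    using assms(5) by blast
  obtain m where fin_G: "finite (carrier G)" and p: "Factorial_Ring.prime p" and ord: "order G = p ^
    m"
    using assms(2) by (auto simp: p_group_def)
  have fin_M: "finite (carrier M)" using assms(4) by (simp add: p_group_def)
  show ?thesis
  proof (cases "gs = []")
    case True
    then have "carrier G = {\<one>\<^bsub>G\<^esub>}" using gs(3) G.generate_empty by simp
    then show ?thesis
      using gmodule.card_H1_H2_trivial_group[OF gmodule.intro[OF assms(6)] _ fin_M] gs(1) True
      by simp
  next
    case False
    then obtain x hs where x: "x \<in> carrier G" and hs: "set hs \<subseteq> H0" and len: "Suc (length hs) = d"
      and gen: "generate G (insert x (set hs)) = carrier G"
      using G.exists_adapted_generators[OF fin_G p ord assms(7,8) gs(2,3)] gs(1) by blast
    have "set hs \<subseteq> carrier G" using hs subgroup.subset[OF assms(7)] by blast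
    moreover have "\<forall>h\<in>set hs. \<forall>m\<in>carrier M. act h m = m" using hs assms(9) by blast
    ultimately show ?thesis
      using card_H_le_of_adapted_generators[OF assms(1) fin_G fin_M assms(6) x _ _ gen] len by simp
  qed
qed

end
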